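(* In the outer-domain setup, let $T>0$, $f_0\in C(\overline{U_T})$, $w_0\in C(\overline U)$, $G\in C(\Gamma\times[0,T])$, and let $w\in C^{2,1}_{x,t}(U_T)\cap C(\overline{U_T})$ be a bounded solution of $\mathcal Lw=f_0$ in $U_T$, $w(x,0)=w_0(x)$ in $U$, $w=G$ on $\Gamma\times(0,T]$. If $\lim_{|x|\to\infty}w_0(x)=0$ and $\lim_{|x|\to\infty}\sup_{0\le t\le T}|f_0(x,t)|=0$, then $\lim_{r\to\infty}\sup_{\mathcal S_r\times[0,T]}|w|=0$.
   Context: Setup. Fix $n\ge2$. For $i=1,2$: $g_i(s)=a^{(i)}_0+\sum_{j=1}^{N_i}a^{(i)}_js^{\alpha^{(i)}_j}$ ($s\ge0$), $a^{(i)}_0>0$, $a^{(i)}_j\ge0$, real $0<\alpha^{(i)}_1<\dots$; $G_i(u)=g_i(|u|)u$ ($u\in\mathbb R$). $f_1,f_2\in C([0,1])\cap C^1((0,1))$, $f_1(0)=0=f_2(1)$, $f_1'>0>f_2'$ on $(0,1)$; $p_c'\in C^1((0,1))$, $p_c'>0$; $F_i=1/(p_c'f_i)$. Fix $r_0>0$, $c_1,c_2$ with $c_1^2+c_2^2>0$, $s_0\in(0,1)$, and let $\hat S$ be a $C^1$ solution on $[r_0,\infty)$ of $\hat S'=G_2(c_2r^{1-n})F_2(\hat S)-G_1(c_1r^{1-n})F_1(\hat S)$, $\hat S(r_0)=s_0$, with $0<\underline s\le\hat S(r)\le\bar s<1$ for all $r\ge r_0$. For $|x|\ge r_0$: $S_*(x)=\hat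 S(|x|)$, $u_i^*(x)=c_i|x|^{-n}x$. For $u\in\mathbb R^n$: $\mathbf G_i(u)=g_i(|u|)u$, Jacobian $\mathbf G_i'(u)=g_i(|u|)I_n+g_i'(|u|)uu^T/|u|$ ($=g_i(0)I_n$ at $u=0$). $B=F_1(S_* )\mathbf G_1'(u_1^* )+F_2(S_* )\mathbf G_2'(u_2^* )$, $A=B^{-1}$, $b=F_2'(S_* )\mathbf G_2(u_2^* )-F_1'(S_* )\mathbf G_1(u_1^* )$. $\mathcal Lw=\partial_tw-\nabla\cdot(A\nabla w)-b\cdot(A\nabla w)$. Outer domain: $U=\mathbb R^n\setminus\overline{B_{r_0}}$, $\Gamma=\{|x|=r_0\}$, $U_T=U\times(0,T]$, $\overline{U_T}=\overline U\times[0,T]$, $\mathcal S_r=\{|x|=r\}$. $C^{2,1}_{x,t}$ as usual. *)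

theory Defs
  imports "HOL-Analysis.Analysis"
begin

definition gfun :: "real \<Rightarrow> (nat \<Rightarrow> real) \<Rightarrow> (nat \<Rightarrow> real) \<Rightarrow> nat \<Rightarrow> real \<Rightarrow> real" where
  "gfun a0 a al N s = a0 + (\<Sum>j=1..N. a j * s powr al j)"

definition g_admissible :: "real \<Rightarrow> (nat \<Rightarrow> real) \<Rightarrow> (nat \<Rightarrow> real) \<Rightarrow> nat \<Rightarrow> bool" where
  "g_admissible a0 a al N \<longleftrightarrow> a0 > 0 \<and> (\<forall>j\<in>{1..N}. a j \<ge> 0) \<and> (\<forall>j\<in>{1..N}. 0 < al j)
     \<and> (\<forall>j\<in>{1..N}. \<forall>k\<in>{1..N}. j < k \<longrightarrow> al j < al k)"

definition outer :: "real^'n \<Rightarrow> real^'n \<Rightarrow> real^'n^'n" where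
  "outer u v = (\<chi> i j. u $ i * v $ j)"

text \<open>Jacobian of the vector map u |-> g(|u|) u.\<close>
definition Gjac :: "(real \<Rightarrow> real) \<Rightarrow> real^'n \<Rightarrow> real^'n^'n" where
  "Gjac g u = (if u = 0 then g 0 *\<^sub>R mat 1
      else g (norm u) *\<^sub>R mat 1 + (deriv g (norm u) / norm u) *\<^sub>R outer u u)"

definition partial :: "'n::finite \<Rightarrow> (real^'n \<Rightarrow> real) \<Rightarrow> real^'n \<Rightarrow> real" where
  "partial i h x = deriv (\<lambda>s. h (x + s *\<^sub>R axis i 1)) 0"

definition grad :: "(real^'n::finite \<Rightarrow> real) \<Rightarrow> real^'n \<Rightarrow> real^'n" where
  "grad h x = (\<chi> i. partial i h x)"

definition C21 :: "(real^'n::finite) set \<Rightarrow> real \<Rightarrow> (real^'n \<Rightarrow> real \<Rightarrow> real) \<Rightarrow> bool" where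
  "C21 W T w \<longleftrightarrow>
     (\<forall>t\<in>{0<..T}. \<forall>x\<in>W. (\<lambda>y. w y t) differentiable (at x)
        \<and> (\<forall>i. (\<lambda>y. partial i (\<lambda>z. w z t) y) differentiable (at x))
        \<and> (\<lambda>s. w x s) differentiable (at t within {0..T}))
   \<and> (\<forall>i. continuous_on (W \<times> {0<..T}) (\<lambda>(x,t). partial i (\<lambda>z. w z t) x))
   \<and> (\<forall>i j. continuous_on (W \<times> {0<..T}) (\<lambda>(x,t). partial j (\<lambda>y. partial i (\<lambda>z. w z t) y) x))
   \<and> continuous_on (W \<times> {0<..T}) (\<lambda>(x,t). vector_derivative (\<lambda>s. w x s) (at t within {0..T}))"

definition Lop :: "(real^'n::finite \<Rightarrow> real^'n^'n) \<Rightarrow> (real^'n \<Rightarrow> real^'n) \<Rightarrow> real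
     \<Rightarrow> (real^'n \<Rightarrow> real \<Rightarrow> real) \<Rightarrow> real^'n \<Rightarrow> real \<Rightarrow> real" where
  "Lop A b T w x t = vector_derivative (\<lambda>s. w x s) (at t within {0..T})
     - (\<Sum>i\<in>UNIV. partial i (\<lambda>y. (A y *v grad (\<lambda>z. w z t) y) $ i) x)
     - b x \<bullet> (A x *v grad (\<lambda>z. w z t) x)"

end

theory Submission
  imports Defs
begin

(*
  In the exterior domain B(y) = alpha I + theta y y^T / |y|^2, so A = B^-1 has the eigenvalue
  1/alpha on y^perp and 1/beta, beta = alpha + theta, along y; both are bounded between positive
  constants, and b(y).y is bounded.  For a radial function p(|y|) with p'(s) = beta(s) s m(s) one
  gets A grad p = m(|y|) y, whose divergence is m'(r) r + n m(r).  This makes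
    2 eps (1 + t) + e^(lambda t) h(|y|) + delta (chi(|y|) + K t),
  with h ~ C e^(-|y|) and chi' = beta s, a strict supersolution.  Comparing +-w with it on annuli
  R1 <= |y| <= R2 by the weak maximum principle (the delta-term dominates w on |y| = R2, the
  h-term on |y| = R1) and letting delta -> 0 gives |w| <= 2 eps (1 + T) + C' e^(-|y|) beyond R1,
  where |w0| and |f0| are below eps.  The data on the inner boundary |x| = r0 never enter.
*)

section \<open>Calculus in several variables\<close>

lemma partial_eq_derivative:
  fixes f :: "real^'n \<Rightarrow> real"
  assumes "(f has_derivative f') (at x)"
  shows "partial i f x = f' (axis i 1)"
proof -
  have l: "linear f'" using assms has_derivative_linear by blast
  have "((\<lambda>s. x + s *\<^sub>R axis i 1) has_derivative (\<lambda>s. s *\<^sub>R axis i 1)) (at 0)"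
    by (auto intro!: derivative_eq_intros)
  moreover have "(f has_derivative f') (at (x + 0 *\<^sub>R axis i 1))" using assms by simp
  ultimately have "((\<lambda>s. f (x + s *\<^sub>R axis i 1)) has_derivative (\<lambda>s. f' (s *\<^sub>R axis i 1))) (at 0)"
    using has_derivative_compose[of "\<lambda>s. x + s *\<^sub>R axis i 1" _ 0 UNIV f f'] by (simp add: o_def)
  then have "((\<lambda>s. f (x + s *\<^sub>R axis i 1)) has_real_derivative f' (axis i 1)) (at 0)"
    by (simp add: has_field_derivative_def linear_scale[OF l] mult_commute_abs)
  then show ?thesis unfolding partial_def by (rule DERIV_imp_deriv)
qed

lemma has_derivative_grad:
  fixes f :: "real^'n \<Rightarrow> real"
  assumes "f differentiable (at x)"
  shows "(f has_derivative (\<lambda>h. grad f x \<bullet> h)) (at x)"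
proof -
  obtain f' where f': "(f has_derivative f') (at x)" using assms by (auto simp: differentiable_def)
  have l: "linear f'" using f' has_derivative_linear by blast
  have "f' h = grad f x \<bullet> h" for h
  proof -
    have "f' h = f' (\<Sum>i\<in>UNIV. h$i *\<^sub>R axis i 1)"
      using basis_expansion[of h] by (simp add: scalar_mult_eq_scaleR)
    also have "\<dots> = grad f x \<bullet> h"
      by (simp add: linear_sum[OF l] linear_scale[OF l] grad_def inner_vec_def
          partial_eq_derivative[OF f'] mult.commute)
    finally show ?thesis .
  qed
  with f' show ?thesis by (metis (no_types, lifting) ext)
qed

lemma grad_differentiable:
  fixes f :: "real^'n \<Rightarrow> real"
  assumes "\<And>i. (\<lambda>y. partial i f y) differentiable (at x)"
  shows "grad f differentiable (at x)"
proof -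
  have "grad f = (\<lambda>y. \<Sum>i\<in>UNIV. partial i f y *\<^sub>R axis i (1::real))"
    using basis_expansion[of "\<chi> i. partial i f _"] by (simp add: fun_eq_iff grad_def scalar_mult_eq_scaleR)
  then show ?thesis using assms by (auto intro!: differentiable_sum differentiable_scaleR)
qed

lemma has_real_derivative_nonneg_at_left_max:
  fixes g :: "real \<Rightarrow> real"
  assumes "(g has_real_derivative D) (at t within {0..T})" "0 < t" "t \<le> T"
    and "\<And>s. s \<in> {0..t} \<Longrightarrow> g s \<le> g t"
  shows "D \<ge> 0"
proof -
  have "(g has_real_derivative D) (at t within {0..t})"
    using assms(1) by (rule DERIV_subset) (use assms in auto)
  then have lim: "((\<lambda>y. (g y - g t) / (y - t)) \<longlongrightarrow> D) (at t within {0..t})"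
    by (simp add: has_field_derivative_iff)
  have "at t within {0..t} = at_left t" using assms(2) by (simp add: at_within_Icc_at_left)
  moreover have "\<forall>\<^sub>F y in at t within {0..t}. 0 \<le> (g y - g t) / (y - t)"
    unfolding eventually_at_filter using assms(4) by (auto intro!: always_eventually divide_nonpos_neg)
  ultimately show ?thesis by (intro tendsto_lowerbound[OF lim]) auto
qed

lemma local_max_second_derivative_nonpos:
  fixes \<phi> \<psi> :: "real \<Rightarrow> real"
  assumes "d > 0" "\<And>s. \<bar>s\<bar> < d \<Longrightarrow> (\<phi> has_real_derivative \<psi> s) (at s)" "\<psi> 0 = 0"
    and "(\<psi> has_real_derivative c) (at 0)" "\<And>s. \<bar>s\<bar> < d \<Longrightarrow> \<phi> s \<le> \<phi> 0"
  shows "c \<le> 0"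
proof (rule ccontr)
  assume "\<not> c \<le> 0"
  then obtain d' where d': "d' > 0" "\<And>h. h > 0 \<Longrightarrow> h < d' \<Longrightarrow> \<psi> 0 < \<psi> (0 + h)"
    using DERIV_pos_inc_right[OF assms(4)] by force
  define s where "s = min d d' / 2"
  have s: "0 < s" "s < d" "s < d'" using assms(1) d'(1) by (auto simp: s_def)
  obtain z where z: "z > 0" "z < s" "\<phi> s - \<phi> 0 = (s - 0) * \<psi> z"
    using MVT2[of 0 s \<phi> \<psi>] s assms(2) by force
  have "\<psi> z > 0" using d'(2)[of z] z s assms(3) by simp
  then have "\<phi> s - \<phi> 0 > 0" using z s by simp
  then show False using s assms(5)[of s] by simp
qed

lemma local_max_gradient_zero_hessian_nonpos:
  fixes Z :: "real^'n \<Rightarrow> real" and DZ :: "real^'n \<Rightarrow> real^'n"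
  assumes e: "e > 0"
    and dZ: "\<And>y. y \<in> ball x e \<Longrightarrow> (Z has_derivative (\<lambda>h. DZ y \<bullet> h)) (at y)"
    and dDZ: "(DZ has_derivative H) (at x)"
    and max: "\<And>y. y \<in> ball x e \<Longrightarrow> Z y \<le> Z x"
  shows "DZ x = 0" "u \<bullet> H u \<le> 0"
proof -
  have "(\<lambda>h. DZ x \<bullet> h) = (\<lambda>v. 0)"
    by (rule differential_zero_maxmin[of x "ball x e" Z]) (use e dZ max in auto)
  then show DZ0: "DZ x = 0" by (metis inner_eq_zero_iff)
  have lH: "linear H" using dDZ has_derivative_linear by blast
  show "u \<bullet> H u \<le> 0"
  proof (cases "u = 0")
    case True then show ?thesis by (simp add: linear_0[OF lH])
  next
    case False
    define d where "d = e / norm u"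
    have d: "d > 0" using e False by (simp add: d_def)
    have inball: "x + s *\<^sub>R u \<in> ball x e" if "\<bar>s\<bar> < d" for s
      using that False by (simp add: dist_norm d_def pos_less_divide_eq)
    have line: "((\<lambda>s. x + s *\<^sub>R u) has_derivative (\<lambda>k. k *\<^sub>R u)) (at s)" for s
      by (auto intro!: derivative_eq_intros)
    have dphi: "((\<lambda>s. Z (x + s *\<^sub>R u)) has_real_derivative (DZ (x + s *\<^sub>R u) \<bullet> u)) (at s)"
      if "\<bar>s\<bar> < d" for s
      using has_derivative_compose[OF line dZ[OF inball[OF that]]]
      by (simp add: o_def has_field_derivative_def mult_commute_abs)
    have "((\<lambda>s. DZ (x + s *\<^sub>R u)) has_derivative (\<lambda>k. H (k *\<^sub>R u))) (at 0)"
      using has_derivative_compose[OF line[of 0], of DZ H] dDZ by (simp add: o_def)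
    then have "((\<lambda>s. DZ (x + s *\<^sub>R u) \<bullet> u) has_derivative (\<lambda>k. H (k *\<^sub>R u) \<bullet> u)) (at 0)"
      by (auto intro!: derivative_eq_intros)
    then have dpsi: "((\<lambda>s. DZ (x + s *\<^sub>R u) \<bullet> u) has_real_derivative (H u \<bullet> u)) (at 0)"
      by (simp add: has_field_derivative_def linear_scale[OF lH] mult_commute_abs)
    have "H u \<bullet> u \<le> 0"
      by (rule local_max_second_derivative_nonpos[OF d dphi _ dpsi]) (use DZ0 max inball in auto)
    then show ?thesis by (simp add: inner_commute)
  qed
qed

lemma has_derivative_radial:
  fixes y :: "real^'n"
  assumes "y \<noteq> 0" "(p has_real_derivative p') (at (norm y))"
  shows "((\<lambda>y. p (norm y)) has_derivative (\<lambda>h. (p' / norm y) * (y \<bullet> h))) (at y)"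
proof -
  have "((\<lambda>y. p (norm y)) has_derivative (\<lambda>h. p' * (h \<bullet> sgn y))) (at y)"
    using has_derivative_compose[OF has_derivative_norm[OF assms(1)], of p "(*) p'"] assms(2)
    by (simp add: o_def has_field_derivative_def)
  moreover have "(\<lambda>h. p' * (h \<bullet> sgn y)) = (\<lambda>h. (p' / norm y) * (y \<bullet> h))"
    by (simp add: fun_eq_iff sgn_div_norm inner_commute divide_inverse mult.commute mult.left_commute)
  ultimately show ?thesis by simp
qed

lemma has_derivative_radial_scaleR:
  fixes y :: "real^'n"
  assumes "y \<noteq> 0" "(q has_real_derivative q') (at (norm y))"
  shows "((\<lambda>y. q (norm y) *\<^sub>R y) has_derivative
           (\<lambda>h. ((q' / norm y) * (y \<bullet> h)) *\<^sub>R y + q (norm y) *\<^sub>R h)) (at y)"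
  using has_derivative_scaleR[OF has_derivative_radial[OF assms] has_derivative_ident]
  by (simp add: add.commute)

text \<open>As \<open>G x = 0\<close>, the derivatives of \<open>ia\<close> and \<open>kp\<close> do not enter.\<close>
lemma radial_field_has_derivative:
  fixes x :: "real^'n" and G :: "real^'n \<Rightarrow> real^'n"
  assumes x: "x \<noteq> 0" and m: "(m has_real_derivative md) (at (norm x))"
    and ia: "ia differentiable (at (norm x))" and kp: "kp differentiable (at (norm x))"
    and G: "(G has_derivative H) (at x)" "G x = 0"
  shows "((\<lambda>y. m (norm y) *\<^sub>R y + ia (norm y) *\<^sub>R G y + (kp (norm y) * (y \<bullet> G y)) *\<^sub>R y) has_derivative
     (\<lambda>h. (md / norm x * (x \<bullet> h)) *\<^sub>R x + m (norm x) *\<^sub>R h + ia (norm x) *\<^sub>R H h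
        + (kp (norm x) * (x \<bullet> H h)) *\<^sub>R x)) (at x)"
proof -
  obtain dia dkp where "(ia has_real_derivative dia) (at (norm x))" "(kp has_real_derivative dkp) (at (norm x))"
    using ia kp by (auto simp: real_differentiable_def)
  note ia' = has_derivative_radial[OF x this(1)] and kp' = has_derivative_radial[OF x this(2)]
  have "((\<lambda>y. m (norm y) *\<^sub>R y + ia (norm y) *\<^sub>R G y + (kp (norm y) * (y \<bullet> G y)) *\<^sub>R y) has_derivative
     (\<lambda>h. ((md / norm x * (x \<bullet> h)) *\<^sub>R x + m (norm x) *\<^sub>R h)
        + (ia (norm x) *\<^sub>R H h + (dia / norm x * (x \<bullet> h)) *\<^sub>R G x)
        + ((kp (norm x) * (x \<bullet> G x)) *\<^sub>R h
           + (kp (norm x) * (x \<bullet> H h + h \<bullet> G x) + dkp / norm x * (x \<bullet> h) * (x \<bullet> G x)) *\<^sub>R x))) (at x)"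
    by (intro has_derivative_add has_derivative_radial_scaleR[OF x m] has_derivative_scaleR[OF ia' G(1)]
        has_derivative_scaleR[OF has_derivative_mult[OF kp' has_derivative_inner[OF has_derivative_ident G(1)]]
          has_derivative_ident])
  then show ?thesis by (rule has_derivative_eq_rhs) (simp add: fun_eq_iff G(2))
qed

lemma radial_field_trace:
  fixes x :: "real^'n" and H :: "real^'n \<Rightarrow> real^'n"
  assumes "x \<noteq> 0"
  shows "(\<Sum>i\<in>UNIV. ((md / norm x * (x \<bullet> axis i 1)) *\<^sub>R x + m *\<^sub>R axis i 1 + ia *\<^sub>R H (axis i 1)
            + (kp * (x \<bullet> H (axis i 1))) *\<^sub>R x) $ i)
    = md * norm x + real CARD('n) * m + (\<Sum>i\<in>UNIV. ia * H (axis i 1) $ i + kp * ((x \<bullet> H (axis i 1)) * x $ i))"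
proof -
  have "(\<Sum>i\<in>UNIV. x $ i * x $ i) = (norm x)\<^sup>2"
    by (simp add: power2_norm_eq_inner inner_vec_def)
  then have "(\<Sum>i\<in>UNIV. md * (x $ i * x $ i) / norm x) = md * norm x"
    using assms by (simp add: sum_divide_distrib[symmetric] sum_distrib_left[symmetric] power2_eq_square)
  then show ?thesis
    using assms by (simp add: inner_axis sum.distrib sum_distrib_left[symmetric] power2_eq_square algebra_simps)
qed

lemma divergence_radial_field:
  fixes x :: "real^'n" and G F :: "real^'n \<Rightarrow> real^'n"
  assumes x: "x \<noteq> 0" and m: "(m has_real_derivative md) (at (norm x))"
    and ia: "ia differentiable (at (norm x))" and kp: "kp differentiable (at (norm x))"
    and G: "(G has_derivative H) (at x)" "G x = 0"
    and S: "open S" "x \<in> S"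
    and F: "\<And>y. y \<in> S \<Longrightarrow>
          F y = c *\<^sub>R (m (norm y) *\<^sub>R y + ia (norm y) *\<^sub>R G y + (kp (norm y) * (y \<bullet> G y)) *\<^sub>R y)"
  shows "(\<Sum>i\<in>UNIV. partial i (\<lambda>y. F y $ i) x) = c * (md * norm x + real CARD('n) * m (norm x)
           + (\<Sum>i\<in>UNIV. ia (norm x) * H (axis i 1) $ i + kp (norm x) * ((x \<bullet> H (axis i 1)) * x $ i)))"
proof -
  define DV where "DV h = (md / norm x * (x \<bullet> h)) *\<^sub>R x + m (norm x) *\<^sub>R h + ia (norm x) *\<^sub>R H h
        + (kp (norm x) * (x \<bullet> H h)) *\<^sub>R x" for h
  have "partial i (\<lambda>y. F y $ i) x = c * DV (axis i 1) $ i" for i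
  proof -
    have "((\<lambda>y. (c *\<^sub>R (m (norm y) *\<^sub>R y + ia (norm y) *\<^sub>R G y + (kp (norm y) * (y \<bullet> G y)) *\<^sub>R y)) $ i)
        has_derivative (\<lambda>h. (c *\<^sub>R DV h) $ i)) (at x)"
      unfolding DV_def
      by (intro bounded_linear.has_derivative[OF bounded_linear_vec_nth] has_derivative_scaleR_right
          radial_field_has_derivative[OF x m ia kp G])
    then have "((\<lambda>y. F y $ i) has_derivative (\<lambda>h. (c *\<^sub>R DV h) $ i)) (at x)"
      by (rule has_derivative_transform_within_open[OF _ S]) (simp add: F)
    then show ?thesis by (simp add: partial_eq_derivative)
  qed
  then have "(\<Sum>i\<in>UNIV. partial i (\<lambda>y. F y $ i) x) = c * (\<Sum>i\<in>UNIV. DV (axis i 1) $ i)"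
    by (simp add: sum_distrib_left)
  also have "(\<Sum>i\<in>UNIV. DV (axis i 1) $ i) = md * norm x + real CARD('n) * m (norm x)
      + (\<Sum>i\<in>UNIV. ia (norm x) * H (axis i 1) $ i + kp (norm x) * ((x \<bullet> H (axis i 1)) * x $ i))"
    unfolding DV_def by (rule radial_field_trace[OF x])
  finally show ?thesis .
qed

lemma le_if_le_add_pos_multiple:
  fixes a c d :: real
  assumes "\<And>\<delta>. \<delta> > 0 \<Longrightarrow> a \<le> c + \<delta> * d" "d \<ge> 0"
  shows "a \<le> c"
proof (rule field_le_epsilon)
  fix e :: real assume e: "e > 0"
  have "a \<le> c + e / (d + 1) * d" using assms(1)[of "e / (d + 1)"] e assms(2) by simp
  also have "e / (d + 1) * d \<le> e" using e assms(2) by (simp add: field_simps)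
  finally show "a \<le> c + e" by simp
qed

lemma uniform_bound_of_sup_tendsto:
  fixes f :: "'a::real_normed_vector \<Rightarrow> real \<Rightarrow> real"
  assumes lim: "((\<lambda>x. SUP t\<in>{a..b}. \<bar>f x t\<bar>) \<longlongrightarrow> 0) at_infinity"
    and cont: "continuous_on ({x. R0 \<le> norm x} \<times> {a..b}) (\<lambda>(x, t). f x t)"
    and e: "0 < e"
  shows "\<exists>R. \<forall>x t. R \<le> norm x \<longrightarrow> t \<in> {a..b} \<longrightarrow> \<bar>f x t\<bar> \<le> e"
proof -
  have "\<forall>\<^sub>F x in at_infinity. dist (SUP t\<in>{a..b}. \<bar>f x t\<bar>) 0 < e" by (rule tendstoD[OF lim e])
  then obtain R where R: "\<And>x. R \<le> norm x \<Longrightarrow> \<bar>SUP t\<in>{a..b}. \<bar>f x t\<bar>\<bar> < e"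
    unfolding eventually_at_infinity dist_real_def by auto
  have "\<bar>f x t\<bar> \<le> e" if x: "max R R0 \<le> norm x" and t: "t \<in> {a..b}" for x t
  proof -
    have "continuous_on {a..b} (Pair x)" "Pair x ` {a..b} \<subseteq> {x. R0 \<le> norm x} \<times> {a..b}"
      using x by (auto intro!: continuous_intros)
    from continuous_on_compose2[OF cont this] have "continuous_on {a..b} (f x)" by simp
    then have "continuous_on {a..b} (\<lambda>t. \<bar>f x t\<bar>)" by (rule continuous_on_rabs)
    then have "compact ((\<lambda>t. \<bar>f x t\<bar>) ` {a..b})" by (rule compact_continuous_image[OF _ compact_Icc])
    then have "bdd_above ((\<lambda>t. \<bar>f x t\<bar>) ` {a..b})" by (rule bounded_imp_bdd_above[OF compact_imp_bounded])
    then have "\<bar>f x t\<bar> \<le> (SUP t\<in>{a..b}. \<bar>f x t\<bar>)" by (rule cSUP_upper[OF t])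
    moreover have "(SUP t\<in>{a..b}. \<bar>f x t\<bar>) < e" using R[of x] x by (simp add: abs_less_iff)
    ultimately show ?thesis by linarith
  qed
  then show ?thesis by blast
qed

section \<open>Rank-one perturbations of the identity\<close>

lemma abs_SUP_abs_le:
  fixes f :: "'a \<Rightarrow> real"
  assumes "a \<in> S" "\<And>p. p \<in> S \<Longrightarrow> \<bar>f p\<bar> \<le> B"
  shows "\<bar>SUP p\<in>S. \<bar>f p\<bar>\<bar> \<le> B"
proof -
  have "bdd_above ((\<lambda>p. \<bar>f p\<bar>) ` S)" using assms(2) by (rule bdd_aboveI2)
  then have "0 \<le> (SUP p\<in>S. \<bar>f p\<bar>)" using cSUP_upper[OF assms(1)] abs_ge_zero order.trans by blast
  moreover have "(SUP p\<in>S. \<bar>f p\<bar>) \<le> B" using assms by (intro cSUP_least) auto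
  ultimately show ?thesis by simp
qed

lemma outer_mult_vec: "outer u v *v z = (v \<bullet> z) *\<^sub>R u"
  by (simp add: outer_def matrix_vector_mult_def vec_eq_iff inner_vec_def sum_distrib_left
      sum_distrib_right algebra_simps)

lemma matrix_inv_eqI:
  fixes B M :: "real^'n^'n"
  assumes "\<And>v. B *v (M *v v) = v" "\<And>v. M *v (B *v v) = v"
  shows "matrix_inv B = M"
proof -
  have BM: "B ** M = mat 1" "M ** B = mat 1"
    using assms by (simp_all add: matrix_eq matrix_vector_mul_assoc[symmetric])
  then have "B ** matrix_inv B = mat 1 \<and> matrix_inv B ** B = mat 1"
    unfolding matrix_inv_def by (intro someI_ex[of "\<lambda>A'. B ** A' = mat 1 \<and> A' ** B = mat 1"]) blast
  then have "matrix_inv B = matrix_inv B ** (B ** M)" using BM by (simp add: matrix_mul_rid)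
  also have "\<dots> = (matrix_inv B ** B) ** M" by (simp add: matrix_mul_assoc)
  also have "\<dots> = M" using \<open>B ** matrix_inv B = mat 1 \<and> matrix_inv B ** B = mat 1\<close>
    by (simp add: matrix_mul_lid)
  finally show ?thesis .
qed

lemma matrix_inv_scaled_identity_plus_projection:
  fixes B :: "real^'n^'n" and y :: "real^'n"
  assumes y: "y \<noteq> 0" and a: "a \<noteq> 0" "a + c \<noteq> 0"
    and B: "\<And>v. B *v v = a *\<^sub>R v + (c / (norm y)\<^sup>2 * (y \<bullet> v)) *\<^sub>R y"
  shows "matrix_inv B *v v = (1 / a) *\<^sub>R v + ((1 / (a + c) - 1 / a) / (norm y)\<^sup>2 * (y \<bullet> v)) *\<^sub>R y"
proof -
  define k where "k = 1 / (a + c) - 1 / a"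
  define M where "M = (1 / a) *\<^sub>R mat 1 + (k / (norm y)\<^sup>2) *\<^sub>R outer y y"
  have M: "M *v v = (1 / a) *\<^sub>R v + (k / (norm y)\<^sup>2 * (y \<bullet> v)) *\<^sub>R y" for v
    by (simp add: M_def matrix_vector_mult_add_rdistrib scaleR_matrix_vector_assoc[symmetric] outer_mult_vec)
  have yy: "y \<bullet> y = (norm y)\<^sup>2" by (simp add: power2_norm_eq_inner)
  have "(a + c) * k = - c / a" using a by (simp add: k_def right_diff_distrib add_divide_distrib)
  then have coeff: "a * k + c * (1 / a + k) = 0" by (simp add: algebra_simps)
  have "B *v (M *v v) = v" "M *v (B *v v) = v" for v
  proof -
    have "B *v (M *v v) = (a * (1 / a)) *\<^sub>R v + ((a * k + c * (1 / a + k)) / (norm y)\<^sup>2 * (y \<bullet> v)) *\<^sub>R y"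
      "M *v (B *v v) = (a * (1 / a)) *\<^sub>R v + ((a * k + c * (1 / a + k)) / (norm y)\<^sup>2 * (y \<bullet> v)) *\<^sub>R y"
      using y by (simp_all add: B M inner_add_right yy algebra_simps add_divide_distrib)
    then show "B *v (M *v v) = v" "M *v (B *v v) = v" using a by (simp_all add: coeff)
  qed
  then have "matrix_inv B = M" by (rule matrix_inv_eqI)
  then show ?thesis by (simp add: M k_def)
qed

lemma trace_nonpos:
  fixes H :: "real^'n \<Rightarrow> real^'n" and x :: "real^'n"
  assumes lH: "linear H" and nsd: "\<And>u. u \<bullet> H u \<le> 0"
  shows "(\<Sum>i\<in>UNIV. a\<^sup>2 * H (axis i 1) $ i + (2*a*b + b\<^sup>2 * (norm x)\<^sup>2) * ((x \<bullet> H (axis i 1)) * x $ i)) \<le> 0"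
proof -
  define P where "P i = a *\<^sub>R axis i (1::real) + (b * x$i) *\<^sub>R x" for i
  have P: "P i \<bullet> H (P i) = a\<^sup>2 * H (axis i 1) $ i + a*b*(x$i * H x $ i) + a*b*((x \<bullet> H (axis i 1)) * x$i)
     + b\<^sup>2 * (x$i)\<^sup>2 * (x \<bullet> H x)" for i
    by (simp add: P_def linear_add[OF lH] linear_scale[OF lH] inner_add_left inner_add_right
        inner_axis' algebra_simps power2_eq_square)
  have "H x = H (\<Sum>i\<in>UNIV. x$i *\<^sub>R axis i 1)"
    using basis_expansion[of x] by (simp add: scalar_mult_eq_scaleR)
  then have Hx: "H x = (\<Sum>i\<in>UNIV. x$i *\<^sub>R H (axis i 1))"
    by (simp add: linear_sum[OF lH] linear_scale[OF lH])
  have s1: "(\<Sum>i\<in>UNIV. x$i * H x $ i) = x \<bullet> H x" by (simp add: inner_vec_def)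
  have s2: "(\<Sum>i\<in>UNIV. (x \<bullet> H (axis i 1)) * x$i) = x \<bullet> H x"
    by (simp add: Hx inner_sum_right mult.commute)
  have s3: "(\<Sum>i\<in>UNIV. (x$i)\<^sup>2) = (norm x)\<^sup>2"
    by (simp add: norm_eq_sqrt_inner inner_vec_def power2_eq_square sum_nonneg)
  have s2': "(\<Sum>i\<in>UNIV. x$i * (x \<bullet> H (axis i 1))) = x \<bullet> H x" using s2 by (simp add: mult.commute)
  have "(\<Sum>i\<in>UNIV. a\<^sup>2 * H (axis i 1) $ i + (2*a*b + b\<^sup>2 * (norm x)\<^sup>2) * ((x \<bullet> H (axis i 1)) * x $ i))
      = a\<^sup>2 * (\<Sum>i\<in>UNIV. H (axis i 1) $ i) + (2*a*b + b\<^sup>2 * (norm x)\<^sup>2) * (x \<bullet> H x)"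
    by (simp add: sum.distrib sum_distrib_left[symmetric] s2)
  also have "\<dots> = (\<Sum>i\<in>UNIV. P i \<bullet> H (P i))"
    by (simp add: P sum.distrib sum_distrib_left[symmetric] sum_distrib_right[symmetric] s1 s2 s2' s3
        algebra_simps)
  also have "\<dots> \<le> 0" by (rule sum_nonpos) (rule nsd)
  finally show ?thesis .
qed

text \<open>The sum is the trace of \<open>M H\<close> with \<open>M = p I + (q - p) x x\<^sup>T / |x|\<^sup>2 = (sqrt p I + b x x\<^sup>T)\<^sup>2\<close>
  for a suitable \<open>b\<close>.\<close>
lemma radial_trace_nonpos:
  fixes H :: "real^'n \<Rightarrow> real^'n" and x :: "real^'n"
  assumes "linear H" "\<And>u. u \<bullet> H u \<le> 0" "p \<ge> 0" "q \<ge> 0" "x \<noteq> 0"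
  shows "(\<Sum>i\<in>UNIV. p * H (axis i 1) $ i + ((q - p) / (norm x)\<^sup>2) * ((x \<bullet> H (axis i 1)) * x $ i)) \<le> 0"
proof -
  define b where "b = (sqrt q - sqrt p) / (norm x)\<^sup>2"
  have "2 * sqrt p * b + b\<^sup>2 * (norm x)\<^sup>2 = ((sqrt q)\<^sup>2 - (sqrt p)\<^sup>2) / (norm x)\<^sup>2"
    using assms(5) by (simp add: b_def field_simps power2_eq_square)
  then have "2 * sqrt p * b + b\<^sup>2 * (norm x)\<^sup>2 = (q - p) / (norm x)\<^sup>2" using assms(3,4) by simp
  then show ?thesis using trace_nonpos[OF assms(1,2), of "sqrt p" b x] assms(3) by simp
qed

section \<open>A maximum principle in the exterior domain\<close>

locale radial_exterior_problem =
  fixes r0 T Q blo bhi :: real and alpha beta :: "real \<Rightarrow> real"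
    and A :: "real^'n::finite \<Rightarrow> real^'n^'n" and b :: "real^'n \<Rightarrow> real^'n"
    and w f0 :: "real^'n \<Rightarrow> real \<Rightarrow> real" and w0 :: "real^'n \<Rightarrow> real"
  assumes r0_pos: "0 < r0" and T_pos: "0 < T"
    and alpha_pos: "\<And>r. r0 \<le> r \<Longrightarrow> 0 < alpha r"
    and blo_pos: "0 < blo" and beta_bounds: "\<And>r. r0 \<le> r \<Longrightarrow> blo \<le> beta r \<and> beta r \<le> bhi"
    and alpha_differentiable: "\<And>r. r0 < r \<Longrightarrow> alpha differentiable (at r)"
    and beta_differentiable: "\<And>r. r0 < r \<Longrightarrow> beta differentiable (at r)"
    and beta_continuous: "continuous_on {r0..} beta"
    and A_mult_vec: "\<And>y v. r0 \<le> norm y \<Longrightarrow> A y *v v = (1 / alpha (norm y)) *\<^sub>R v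
          + ((1 / beta (norm y) - 1 / alpha (norm y)) / (norm y)\<^sup>2 * (y \<bullet> v)) *\<^sub>R y"
    and b_inner_bounded: "\<And>y. r0 \<le> norm y \<Longrightarrow> \<bar>b y \<bullet> y\<bar> \<le> Q"
    and w_C21: "C21 {x. r0 < norm x} T w"
    and w_continuous: "continuous_on ({x. r0 \<le> norm x} \<times> {0..T}) (\<lambda>(x, t). w x t)"
    and w_eq: "\<And>x t. r0 < norm x \<Longrightarrow> t \<in> {0<..T} \<Longrightarrow> Lop A b T w x t = f0 x t"
    and w_init: "\<And>x. r0 < norm x \<Longrightarrow> w x 0 = w0 x"

begin

lemma Q_nonneg: "0 \<le> Q"
proof -
  obtain i :: 'n where True by blast
  show ?thesis using b_inner_bounded[of "r0 *\<^sub>R axis i 1"] r0_pos abs_ge_zero order.trans by auto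
qed

lemma A_mult_radial_plus:
  assumes "r0 \<le> norm y"
  shows "A y *v ((beta (norm y) * c) *\<^sub>R y + v) = c *\<^sub>R y + (1 / alpha (norm y)) *\<^sub>R v
     + ((1 / beta (norm y) - 1 / alpha (norm y)) / (norm y)\<^sup>2 * (y \<bullet> v)) *\<^sub>R y"
proof -
  have "y \<noteq> 0" "beta (norm y) \<noteq> 0" using assms r0_pos blo_pos beta_bounds[OF assms] by auto
  then have "A y *v y = (1 / beta (norm y)) *\<^sub>R y"
    by (simp add: A_mult_vec[OF assms] power2_norm_eq_inner[symmetric] diff_divide_distrib
        flip: scaleR_add_left) (simp add: field_simps)
  then show ?thesis
    using \<open>beta (norm y) \<noteq> 0\<close>
    by (simp add: matrix_vector_right_distrib matrix_vector_mult_scaleR A_mult_vec[OF assms, of v])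
qed

lemma spatial_max_critical:
  fixes x :: "real^'n" and p m :: "real \<Rightarrow> real"
  assumes x: "r0 < norm x" and t: "t \<in> {0<..T}"
    and p: "\<And>s. r0 < s \<Longrightarrow> (p has_real_derivative beta s * s * m s) (at s)"
    and m: "(m has_real_derivative md) (at (norm x))"
    and ball: "0 < \<rho>" "ball x \<rho> \<subseteq> {y. r0 < norm y}"
    and max: "\<And>y. y \<in> ball x \<rho> \<Longrightarrow> \<sigma> * w y t - p (norm y) \<le> \<sigma> * w x t - p (norm x)"
  defines "Gz \<equiv> \<lambda>y. \<sigma> *\<^sub>R grad (\<lambda>z. w z t) y - (beta (norm y) * m (norm y)) *\<^sub>R y"
  obtains H where "(Gz has_derivative H) (at x)" "Gz x = 0" "\<And>u. u \<bullet> H u \<le> 0"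
proof -
  have x0: "x \<noteq> 0" using x r0_pos by auto
  have w_diff: "(\<lambda>y. w y t) differentiable (at y)" "(\<lambda>y. partial i (\<lambda>z. w z t) y) differentiable (at y)"
    if "r0 < norm y" for y i
    using w_C21 t that unfolding C21_def by auto
  have Z: "((\<lambda>y. \<sigma> * w y t - p (norm y)) has_derivative (\<lambda>h. Gz y \<bullet> h)) (at y)" if "y \<in> ball x \<rho>" for y
  proof -
    have y: "r0 < norm y" using ball that by auto
    then have "y \<noteq> 0" using r0_pos by auto
    have "((\<lambda>y. \<sigma> * w y t - p (norm y)) has_derivative (\<lambda>h. \<sigma> * (grad (\<lambda>z. w z t) y \<bullet> h)
        - (beta (norm y) * norm y * m (norm y) / norm y) * (y \<bullet> h))) (at y)"
      by (intro has_derivative_diff has_derivative_mult_right has_derivative_grad w_diff(1)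
          has_derivative_radial p y \<open>y \<noteq> 0\<close>)
    then show ?thesis
      by (rule has_derivative_eq_rhs) (use \<open>y \<noteq> 0\<close> in \<open>auto simp: fun_eq_iff Gz_def inner_diff_left\<close>)
  qed
  obtain Db where Db: "(beta has_real_derivative Db) (at (norm x))"
    using beta_differentiable[OF x] by (auto simp: real_differentiable_def)
  have "(\<lambda>y. (beta (norm y) * m (norm y)) *\<^sub>R y) differentiable (at x)"
    using has_derivative_radial_scaleR[OF x0 DERIV_mult[OF Db m]] by (auto simp: differentiable_def)
  moreover have "grad (\<lambda>z. w z t) differentiable (at x)" by (rule grad_differentiable[OF w_diff(2)[OF x]])
  ultimately have "Gz differentiable (at x)" unfolding Gz_def
    by (intro differentiable_diff differentiable_scaleR[OF differentiable_const])
  then obtain H where H: "(Gz has_derivative H) (at x)" by (auto simp: differentiable_def)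
  moreover have "Gz x = 0" "\<And>u. u \<bullet> H u \<le> 0"
    using local_max_gradient_zero_hessian_nonpos[OF ball(1) Z H max] by auto
  ultimately show ?thesis using that by blast
qed

lemma operator_at_spatial_max:
  fixes x :: "real^'n" and p m :: "real \<Rightarrow> real"
  assumes x: "r0 < norm x" and t: "t \<in> {0<..T}" and sig: "\<sigma> = 1 \<or> \<sigma> = -1"
    and p: "\<And>s. r0 < s \<Longrightarrow> (p has_real_derivative beta s * s * m s) (at s)"
    and m: "(m has_real_derivative md) (at (norm x))"
    and ball: "0 < \<rho>" "ball x \<rho> \<subseteq> {y. r0 < norm y}"
    and max: "\<And>y. y \<in> ball x \<rho> \<Longrightarrow> \<sigma> * w y t - p (norm y) \<le> \<sigma> * w x t - p (norm x)"
  shows "\<sigma> * vector_derivative (\<lambda>s. w x s) (at t within {0..T})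
    - (md * norm x + real CARD('n) * m (norm x)) - m (norm x) * (b x \<bullet> x) \<le> \<sigma> * f0 x t"
proof -
  have x0: "x \<noteq> 0" using x r0_pos by auto
  have ab: "0 < alpha (norm x)" "0 < beta (norm x)"
    using alpha_pos[of "norm x"] beta_bounds[of "norm x"] blo_pos x by auto
  define gw where "gw = grad (\<lambda>z. w z t)"
  define Gz where "Gz y = \<sigma> *\<^sub>R gw y - (beta (norm y) * m (norm y)) *\<^sub>R y" for y
  obtain H where H: "(Gz has_derivative H) (at x)" and Gz0: "Gz x = 0" and nsd: "\<And>u. u \<bullet> H u \<le> 0"
    using spatial_max_critical[OF x t p m ball max] unfolding Gz_def[abs_def] gw_def by blast
  define ia where "ia s = 1 / alpha s" for s
  define kp where "kp s = (1 / beta s - 1 / alpha s) / s\<^sup>2" for s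
  have AV: "A y *v gw y
      = \<sigma> *\<^sub>R (m (norm y) *\<^sub>R y + ia (norm y) *\<^sub>R Gz y + (kp (norm y) * (y \<bullet> Gz y)) *\<^sub>R y)"
    if "y \<in> {y. r0 < norm y}" for y
  proof -
    have "gw y = \<sigma> *\<^sub>R ((beta (norm y) * m (norm y)) *\<^sub>R y + Gz y)" using sig by (auto simp: Gz_def)
    then show ?thesis using that by (simp add: matrix_vector_mult_scaleR A_mult_radial_plus ia_def kp_def)
  qed
  have "ia differentiable (at (norm x))" "kp differentiable (at (norm x))"
    unfolding ia_def[abs_def] kp_def[abs_def] using x x0 ab
    by (auto intro!: differentiable_divide differentiable_diff alpha_differentiable beta_differentiable)
  moreover have "open {y::real^'n. r0 < norm y}" by (intro open_Collect_less continuous_intros)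
  ultimately have div: "(\<Sum>i\<in>UNIV. partial i (\<lambda>y. (A y *v gw y) $ i) x)
      = \<sigma> * (md * norm x + real CARD('n) * m (norm x)
          + (\<Sum>i\<in>UNIV. ia (norm x) * H (axis i 1) $ i + kp (norm x) * ((x \<bullet> H (axis i 1)) * x $ i)))"
    using x by (intro divergence_radial_field[OF x0 m _ _ H Gz0 _ _ AV]) auto
  have "(\<Sum>i\<in>UNIV. ia (norm x) * H (axis i 1) $ i + kp (norm x) * ((x \<bullet> H (axis i 1)) * x $ i)) \<le> 0"
    unfolding ia_def kp_def
    using radial_trace_nonpos[OF has_derivative_linear[OF H] nsd, of "1 / alpha (norm x)" "1 / beta (norm x)" x]
      ab x0 by (simp add: less_imp_le)
  then have div: "\<sigma> * (\<Sum>i\<in>UNIV. partial i (\<lambda>y. (A y *v gw y) $ i) x)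
      \<le> md * norm x + real CARD('n) * m (norm x)"
    unfolding div using sig by auto
  have "b x \<bullet> (A x *v gw x) = \<sigma> * (m (norm x) * (b x \<bullet> x))"
    using AV x Gz0 by simp
  then show ?thesis
    using w_eq[OF x t] div sig unfolding Lop_def gw_def[symmetric] by auto
qed

lemma time_derivative_at_left_max:
  assumes x: "r0 < norm x" and t: "t \<in> {0<..T}"
    and \<phi>: "(\<phi> has_real_derivative \<phi>') (at t within {0..T})"
    and max: "\<And>s. s \<in> {0..t} \<Longrightarrow> \<sigma> * w x s - \<phi> s \<le> \<sigma> * w x t - \<phi> t"
  shows "\<phi>' \<le> \<sigma> * vector_derivative (\<lambda>s. w x s) (at t within {0..T})"
proof -
  have "(\<lambda>s. w x s) differentiable (at t within {0..T})" using w_C21 t x unfolding C21_def by auto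
  then have "((\<lambda>s. w x s) has_real_derivative vector_derivative (\<lambda>s. w x s) (at t within {0..T}))
      (at t within {0..T})"
    by (simp add: vector_derivative_works has_real_derivative_iff_has_vector_derivative)
  from DERIV_diff[OF DERIV_cmult[OF this] \<phi>, of \<sigma>]
  have "0 \<le> \<sigma> * vector_derivative (\<lambda>s. w x s) (at t within {0..T}) - \<phi>'"
    using t by (intro has_real_derivative_nonneg_at_left_max[where g = "\<lambda>s. \<sigma> * w x s - \<phi> s", OF _ _ _ max])
      auto
  then show ?thesis by simp
qed

definition beta_integral :: "(real \<Rightarrow> real) \<Rightarrow> real \<Rightarrow> real" where
  "beta_integral k r = integral {r0..r} (\<lambda>\<rho>. beta \<rho> * k \<rho>)"

lemma beta_integral_has_real_derivative:
  assumes k: "continuous_on {r0..} k" and r: "r0 < r"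
  shows "(beta_integral k has_real_derivative beta r * k r) (at r)"
proof -
  have "continuous_on {r0..r+1} (\<lambda>\<rho>. beta \<rho> * k \<rho>)"
    using continuous_on_subset[OF beta_continuous] continuous_on_subset[OF k]
    by (intro continuous_on_mult) auto
  then have "(beta_integral k has_real_derivative beta r * k r) (at r within {r0..r+1})"
    using integral_has_real_derivative[of r0 "r+1" _ r] r unfolding beta_integral_def[abs_def] by simp
  moreover have "at r within {r0..r+1} = at r" using r by (intro at_within_interior) simp
  ultimately show ?thesis by simp
qed

text \<open>A variant of \<open>C e\<^sup>-\<^sup>s\<close> chosen so that \<open>A(y) \<nabla>\<^sub>y exp_barrier C R |y| = - C e\<^sup>-\<^sup>|\<^sup>y\<^sup>| y / |y|\<close>
  exactly.\<close>
definition exp_barrier :: "real \<Rightarrow> real \<Rightarrow> real \<Rightarrow> real" where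
  "exp_barrier C R s = C * (beta_integral (\<lambda>s. exp (- s)) R - beta_integral (\<lambda>s. exp (- s)) s
     + bhi * exp (- R))"

lemma exp_barrier_has_real_derivative:
  assumes "r0 < s"
  shows "(exp_barrier C R has_real_derivative - C * beta s * exp (- s)) (at s)"
proof -
  have "continuous_on {r0..} (\<lambda>s. exp (- s))" by (intro continuous_intros)
  then have "(exp_barrier C R has_real_derivative C * (0 - beta s * exp (- s) + 0)) (at s)"
    unfolding exp_barrier_def[abs_def]
    by (intro DERIV_cmult DERIV_add DERIV_diff DERIV_const beta_integral_has_real_derivative assms)
  then show ?thesis by (simp add: mult.assoc)
qed

lemma exp_barrier_bounds:
  assumes C: "0 \<le> C" and s: "r0 < s" "s \<le> R"
  shows "C * blo * exp (- s) \<le> exp_barrier C R s" "exp_barrier C R s \<le> C * bhi * exp (- s)"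
proof -
  have beta_u: "blo \<le> beta u" "beta u \<le> bhi" if "u \<in> {s..R}" for u
    using beta_bounds[of u] that s by auto
  have "exp_barrier C R R - C * blo * exp (- R) \<le> exp_barrier C R s - C * blo * exp (- s)"
  proof (rule deriv_nonpos_imp_antimono[OF _ _ s(2)])
    fix u assume u: "u \<in> {s..R}"
    show "((\<lambda>s. exp_barrier C R s - C * blo * exp (- s)) has_real_derivative
        - C * beta u * exp (- u) + C * blo * exp (- u)) (at u)"
      using u s by (auto intro!: derivative_eq_intros exp_barrier_has_real_derivative)
    show "- C * beta u * exp (- u) + C * blo * exp (- u) \<le> 0"
      using beta_u[OF u] C by (simp add: mult_left_mono mult_right_mono algebra_simps)
  qed
  moreover have "C * blo * exp (- R) \<le> C * bhi * exp (- R)"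
    using beta_bounds[of R] s C by (intro mult_left_mono mult_right_mono) auto
  ultimately show "C * blo * exp (- s) \<le> exp_barrier C R s"
    by (simp add: exp_barrier_def algebra_simps)
  have "C * bhi * exp (- R) - exp_barrier C R R \<le> C * bhi * exp (- s) - exp_barrier C R s"
  proof (rule deriv_nonpos_imp_antimono[OF _ _ s(2)])
    fix u assume u: "u \<in> {s..R}"
    show "((\<lambda>s. C * bhi * exp (- s) - exp_barrier C R s) has_real_derivative
        - C * bhi * exp (- u) + C * beta u * exp (- u)) (at u)"
      using u s by (auto intro!: derivative_eq_intros exp_barrier_has_real_derivative)
    show "- C * bhi * exp (- u) + C * beta u * exp (- u) \<le> 0"
      using beta_u[OF u] C by (simp add: mult_left_mono mult_right_mono algebra_simps)
  qed
  then show "exp_barrier C R s \<le> C * bhi * exp (- s)" by (simp add: exp_barrier_def)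
qed

lemma exp_barrier_nonneg:
  assumes "0 \<le> C" "r0 < s" "s \<le> R"
  shows "0 \<le> exp_barrier C R s"
  using exp_barrier_bounds(1)[OF assms] assms(1) blo_pos by (meson exp_ge_zero mult_nonneg_nonneg order.trans less_imp_le)

definition radial_weight :: "real \<Rightarrow> real" where "radial_weight = beta_integral (\<lambda>s. s)"

lemma radial_weight_has_real_derivative:
  "r0 < s \<Longrightarrow> (radial_weight has_real_derivative beta s * s) (at s)"
  unfolding radial_weight_def by (rule beta_integral_has_real_derivative) (intro continuous_intros)

lemma radial_weight_nonneg:
  assumes "r0 \<le> s"
  shows "0 \<le> radial_weight s"
proof -
  have "continuous_on {r0..s} (\<lambda>\<rho>. beta \<rho> * \<rho>)"
    using continuous_on_subset[OF beta_continuous] by (intro continuous_intros) auto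
  moreover have "0 \<le> beta \<rho> * \<rho>" if "\<rho> \<in> {r0..s}" for \<rho>
    using that beta_bounds[of \<rho>] blo_pos r0_pos by auto
  ultimately show ?thesis unfolding radial_weight_def beta_integral_def
    by (intro integral_nonneg integrable_continuous_real) auto
qed

lemma radial_weight_growth:
  assumes R: "r0 < R1" "R1 \<le> R"
  shows "blo * r0 * (R - R1) \<le> radial_weight R"
proof -
  have "radial_weight R1 - blo * r0 * R1 \<le> radial_weight R - blo * r0 * R"
  proof (rule deriv_nonneg_imp_mono[OF _ _ R(2)])
    fix u assume u: "u \<in> {R1..R}"
    then show "((\<lambda>s. radial_weight s - blo * r0 * s) has_real_derivative beta u * u - blo * r0) (at u)"
      using R by (auto intro!: derivative_eq_intros radial_weight_has_real_derivative)
    show "0 \<le> beta u * u - blo * r0"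
      using beta_bounds[of u] u R blo_pos r0_pos mult_mono[of blo "beta u" r0 u] by auto
  qed
  then show ?thesis using radial_weight_nonneg[of R1] R by (simp add: algebra_simps)
qed

definition barrier_rate :: real where "barrier_rate = (1 + Q / r0) / blo"

text \<open>The comparison function of the maximum principle, used with \<open>\<delta> \<rightarrow> 0\<close>; the \<open>\<delta>\<close>-term grows
  at infinity and so confines the maximum to a bounded annulus.\<close>
definition barrier :: "real \<Rightarrow> real \<Rightarrow> real \<Rightarrow> real \<Rightarrow> real^'n \<Rightarrow> real \<Rightarrow> real" where
  "barrier \<epsilon> \<delta> C R y t = 2 * \<epsilon> * (1 + t) + exp (barrier_rate * t) * exp_barrier C R (norm y)
     + \<delta> * (radial_weight (norm y) + (real CARD('n) + Q + 1) * t)"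

lemma barrier_radial_derivative:
  assumes "r0 < s"
  shows "((\<lambda>s. E * exp_barrier C R s + \<delta> * radial_weight s) has_real_derivative
           beta s * s * (\<delta> - C * E * exp (- s) / s)) (at s)"
proof -
  have "((\<lambda>s. E * exp_barrier C R s + \<delta> * radial_weight s) has_real_derivative
      E * (- C * beta s * exp (- s)) + \<delta> * (beta s * s)) (at s)"
    by (intro DERIV_add DERIV_cmult exp_barrier_has_real_derivative radial_weight_has_real_derivative assms)
  moreover have "E * (- C * beta s * exp (- s)) + \<delta> * (beta s * s) = beta s * s * (\<delta> - C * E * exp (- s) / s)"
    using assms r0_pos by (simp add: field_simps)
  ultimately show ?thesis by simp
qed

lemma barrier_rate_exp_barrier_bound:
  assumes C: "0 \<le> C" and s: "r0 < s" "s \<le> R" and E: "0 \<le> E"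
  shows "C * E * exp (- s) * (1 + Q / r0) \<le> barrier_rate * E * exp_barrier C R s"
proof -
  have "0 \<le> barrier_rate" using Q_nonneg r0_pos blo_pos by (simp add: barrier_rate_def)
  then have "barrier_rate * E * (C * blo * exp (- s)) \<le> barrier_rate * E * exp_barrier C R s"
    using exp_barrier_bounds(1)[OF C s] E by (intro mult_left_mono) auto
  moreover have "barrier_rate * E * (C * blo * exp (- s)) = C * E * exp (- s) * (1 + Q / r0)"
    using blo_pos by (simp add: barrier_rate_def)
  ultimately show ?thesis by simp
qed

lemma barrier_supersolution:
  fixes x :: "real^'n"
  assumes x: "r0 < norm x" "norm x \<le> R" and t: "t \<in> {0<..T}" and sig: "\<sigma> = 1 \<or> \<sigma> = -1"
    and C: "0 \<le> C" and \<delta>: "0 < \<delta>"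
    and ball: "0 < \<rho>" "ball x \<rho> \<subseteq> {y. r0 < norm y}"
    and space_max: "\<And>y. y \<in> ball x \<rho> \<Longrightarrow>
          \<sigma> * w y t - barrier \<epsilon> \<delta> C R y t \<le> \<sigma> * w x t - barrier \<epsilon> \<delta> C R x t"
    and time_max: "\<And>s. s \<in> {0..t} \<Longrightarrow>
          \<sigma> * w x s - barrier \<epsilon> \<delta> C R x s \<le> \<sigma> * w x t - barrier \<epsilon> \<delta> C R x t"
  shows "2 * \<epsilon> + \<delta> \<le> \<sigma> * f0 x t"
proof -
  define r where "r = norm x"
  have r: "r0 < r" "0 < r" using x r0_pos by (auto simp: r_def)
  define E where "E = exp (barrier_rate * t)"
  define p where "p s = E * exp_barrier C R s + \<delta> * radial_weight s" for s
  define m where "m s = \<delta> - C * E * exp (- s) / s" for s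
  define md where "md = C * E * (exp (- r) / r + exp (- r) / r\<^sup>2)"
  have "(m has_real_derivative md) (at r)"
    unfolding m_def[abs_def] md_def using r by (auto intro!: derivative_eq_intros simp: field_simps power2_eq_square)
  moreover have "(p has_real_derivative beta s * s * m s) (at s)" if "r0 < s" for s
    unfolding p_def[abs_def] m_def using that by (rule barrier_radial_derivative)
  moreover have "\<sigma> * w y t - p (norm y) \<le> \<sigma> * w x t - p (norm x)" if "y \<in> ball x \<rho>" for y
    using space_max[OF that] by (simp add: barrier_def p_def E_def algebra_simps)
  ultimately have space: "\<sigma> * vector_derivative (\<lambda>s. w x s) (at t within {0..T})
      - (md * r + real CARD('n) * m r) - m r * (b x \<bullet> x) \<le> \<sigma> * f0 x t"
    unfolding r_def by (intro operator_at_spatial_max[OF x(1) t sig _ _ ball]) auto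
  have "((\<lambda>s. barrier \<epsilon> \<delta> C R x s) has_real_derivative
      2 * \<epsilon> + barrier_rate * E * exp_barrier C R r + \<delta> * (real CARD('n) + Q + 1)) (at t within {0..T})"
    unfolding barrier_def E_def r_def by (auto intro!: derivative_eq_intros simp: algebra_simps)
  from time_derivative_at_left_max[OF x(1) t this time_max]
  have time: "2 * \<epsilon> + barrier_rate * E * exp_barrier C R r + \<delta> * (real CARD('n) + Q + 1)
      \<le> \<sigma> * vector_derivative (\<lambda>s. w x s) (at t within {0..T})" .
  have Q: "0 \<le> Q" "\<bar>b x \<bullet> x\<bar> \<le> Q" using Q_nonneg b_inner_bounded x by auto
  define q where "q = C * E * exp (- r)"
  have q: "0 \<le> q" "0 \<le> q / r" using C r by (simp_all add: q_def E_def)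
  have "q * (1 + Q / r0) \<le> barrier_rate * E * exp_barrier C R r"
    unfolding q_def using barrier_rate_exp_barrier_bound[OF C r(1) _, of R E] x by (simp add: r_def E_def)
  moreover have "m r * (b x \<bullet> x) \<le> \<delta> * Q + q * Q / r0"
  proof -
    have "q / r * (- (b x \<bullet> x)) \<le> q / r * \<bar>b x \<bullet> x\<bar>" by (rule mult_left_mono[OF abs_ge_minus_self q(2)])
    also have "\<dots> \<le> q / r * Q" by (rule mult_left_mono[OF Q(2) q(2)])
    also have "\<dots> \<le> q * Q / r0" using q Q r r0_pos by (simp add: divide_simps mult_left_mono mult_right_mono)
    finally have "- (q / r * (b x \<bullet> x)) \<le> q * Q / r0" by simp
    moreover have "\<delta> * (b x \<bullet> x) \<le> \<delta> * Q" using \<delta> Q by (simp add: abs_le_iff)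
    ultimately show ?thesis by (simp add: m_def q_def algebra_simps)
  qed
  moreover have "1 * (q / r) \<le> real CARD('n) * (q / r)"
    using q(2) by (intro mult_right_mono) (simp_all add: Suc_le_eq)
  moreover have "md * r = q + q / r" using r by (simp add: md_def q_def field_simps power2_eq_square)
  moreover have "real CARD('n) * m r = real CARD('n) * \<delta> - real CARD('n) * (q / r)"
    by (simp add: m_def q_def algebra_simps)
  moreover have "q * (1 + Q / r0) = q + q * Q / r0" by (simp add: algebra_simps)
  moreover have "\<delta> * (real CARD('n) + Q + 1) = real CARD('n) * \<delta> + \<delta> * Q + \<delta>"
    by (simp add: algebra_simps)
  text \<open>The \<open>e\<^sup>-\<^sup>r\<close>-terms are absorbed by \<open>barrier_rate\<close>, the \<open>\<delta>\<close>-terms by the time slope.\<close>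
  ultimately show ?thesis using space time by linarith
qed

lemma barrier_parabolic_boundary:
  fixes x :: "real^'n"
  assumes \<epsilon>: "0 < \<epsilon>" and \<delta>: "0 < \<delta>" and C: "0 \<le> C" and sig: "\<sigma> = 1 \<or> \<sigma> = -1"
    and M: "\<And>x t. r0 \<le> norm x \<Longrightarrow> t \<in> {0..T} \<Longrightarrow> \<bar>w x t\<bar> \<le> M"
    and w0: "\<And>x. R1 \<le> norm x \<Longrightarrow> \<bar>w0 x\<bar> \<le> \<epsilon>"
    and inner: "M \<le> C * blo * exp (- R1)" and outer: "M \<le> \<delta> * radial_weight R2"
    and R1: "r0 < R1" and x: "R1 \<le> norm x" "norm x \<le> R2" and t: "t \<in> {0..T}"
    and boundary: "t = 0 \<or> norm x = R1 \<or> norm x = R2"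
  shows "\<sigma> * w x t < barrier \<epsilon> \<delta> C R2 x t"
proof -
  have r: "r0 < norm x" using R1 x by simp
  define h where "h = exp (barrier_rate * t) * exp_barrier C R2 (norm x)"
  define g where "g = \<delta> * (radial_weight (norm x) + (real CARD('n) + Q + 1) * t)"
  have "1 \<le> exp (barrier_rate * t)" using Q_nonneg r0_pos blo_pos t by (simp add: barrier_rate_def)
  then have h: "exp_barrier C R2 (norm x) \<le> h" "0 \<le> h"
    using exp_barrier_nonneg[OF C r x(2)] by (simp_all add: h_def mult_le_cancel_right1)
  have g: "\<delta> * radial_weight (norm x) \<le> g" "0 \<le> g"
    using radial_weight_nonneg[of "norm x"] r Q_nonneg t \<delta> by (simp_all add: g_def)
  have barrier: "barrier \<epsilon> \<delta> C R2 x t = 2 * \<epsilon> * (1 + t) + h + g" by (simp add: barrier_def h_def g_def)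
  have pos: "\<epsilon> < 2 * \<epsilon> * (1 + t)" using \<epsilon> t by (simp add: algebra_simps add_pos_nonneg)
  have "\<sigma> * w x t \<le> \<epsilon> \<or> \<sigma> * w x t \<le> h \<or> \<sigma> * w x t \<le> g"
  proof -
    have wM: "\<sigma> * w x t \<le> M" using M[of x t] r t sig by auto
    consider "t = 0" | "norm x = R1" | "norm x = R2" using boundary by blast
    then show ?thesis
    proof cases
      case 1
      then show ?thesis using w_init[OF r] w0[OF x(1)] sig by auto
    next
      case 2
      then show ?thesis using wM inner exp_barrier_bounds(1)[OF C r x(2)] h by auto
    next
      case 3
      then show ?thesis using wM outer g by auto
    qed
  qed
  then show ?thesis using pos \<epsilon> h(2) g(2) unfolding barrier by (elim disjE) linarith+
qed

lemma barrier_comparison: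
  fixes x0 :: "real^'n"
  assumes \<epsilon>: "0 < \<epsilon>" and \<delta>: "0 < \<delta>" and C: "0 \<le> C" and sig: "\<sigma> = 1 \<or> \<sigma> = -1"
    and M: "\<And>x t. r0 \<le> norm x \<Longrightarrow> t \<in> {0..T} \<Longrightarrow> \<bar>w x t\<bar> \<le> M"
    and w0: "\<And>x. R1 \<le> norm x \<Longrightarrow> \<bar>w0 x\<bar> \<le> \<epsilon>"
    and f0: "\<And>x t. R1 \<le> norm x \<Longrightarrow> t \<in> {0..T} \<Longrightarrow> \<bar>f0 x t\<bar> \<le> \<epsilon>"
    and inner: "M \<le> C * blo * exp (- R1)" and outer: "M \<le> \<delta> * radial_weight R2"
    and R1: "r0 < R1" and x0: "R1 \<le> norm x0" "norm x0 \<le> R2" and t0: "t0 \<in> {0..T}"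
  shows "\<sigma> * w x0 t0 \<le> barrier \<epsilon> \<delta> C R2 x0 t0"
proof (rule ccontr)
  assume contra: "\<not> ?thesis"
  define K where "K = {y::real^'n. R1 \<le> norm y \<and> norm y \<le> R2} \<times> {0..T}"
  define z where "z p = \<sigma> * w (fst p) (snd p) - barrier \<epsilon> \<delta> C R2 (fst p) (snd p)" for p
  have "{y::real^'n. R1 \<le> norm y \<and> norm y \<le> R2} = cball 0 R2 - ball 0 R1" by auto
  then have "compact {y::real^'n. R1 \<le> norm y \<and> norm y \<le> R2}" by (simp add: compact_diff)
  then have "compact K" unfolding K_def by (auto intro!: compact_Times compact_diff)
  have K: "norm (fst p) \<in> {r0<..}" if "p \<in> K" for p using that R1 by (auto simp: K_def)
  have norm_K: "continuous_on K (\<lambda>p. norm (fst p))" "(\<lambda>p. norm (fst p)) ` K \<subseteq> {r0<..}"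
    using K by (auto intro!: continuous_intros)
  have "continuous_on {r0<..} (exp_barrier C R2)" "continuous_on {r0<..} radial_weight"
    using exp_barrier_has_real_derivative radial_weight_has_real_derivative
    by (auto intro!: continuous_at_imp_continuous_on DERIV_isCont)
  then have "continuous_on K (\<lambda>p. exp_barrier C R2 (norm (fst p)))"
    "continuous_on K (\<lambda>p. radial_weight (norm (fst p)))"
    using continuous_on_compose2[OF _ norm_K] by blast+
  moreover have "K \<subseteq> {x. r0 \<le> norm x} \<times> {0..T}" using R1 by (auto simp: K_def)
  then have "continuous_on K (\<lambda>p. w (fst p) (snd p))"
    using continuous_on_subset[OF w_continuous] by (simp add: case_prod_beta')
  ultimately have "continuous_on K z" unfolding z_def barrier_def by (intro continuous_intros)
  moreover have x0K: "(x0, t0) \<in> K" using x0 t0 by (simp add: K_def)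
  ultimately obtain p where p: "p \<in> K" "\<And>q. q \<in> K \<Longrightarrow> z q \<le> z p"
    using continuous_attains_sup[OF \<open>compact K\<close>, of z] by blast
  obtain x t where xt: "p = (x, t)" by (cases p)
  have x: "R1 \<le> norm x" "norm x \<le> R2" "t \<in> {0..T}" using p(1) xt by (auto simp: K_def)
  have max: "z q \<le> z (x, t)" if "q \<in> K" for q using p(2)[OF that] xt by simp
  have "0 < z (x, t)" using max[OF x0K] contra by (simp add: z_def)
  then have "\<not> (t = 0 \<or> norm x = R1 \<or> norm x = R2)"
    using barrier_parabolic_boundary[OF \<epsilon> \<delta> C sig M w0 inner outer R1 x] by (auto simp: z_def)
  then have interior: "R1 < norm x" "norm x < R2" "0 < t" using x by auto
  define \<rho> where "\<rho> = min (norm x - R1) (R2 - norm x)"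
  have ball: "R1 < norm y \<and> norm y < R2" if "y \<in> ball x \<rho>" for y
    using that norm_triangle_ineq3[of y x] by (auto simp: \<rho>_def dist_norm norm_minus_commute)
  have "2 * \<epsilon> + \<delta> \<le> \<sigma> * f0 x t"
  proof (rule barrier_supersolution[of x R2 t \<sigma> C \<delta> \<rho>])
    show "0 < \<rho>" using interior by (simp add: \<rho>_def)
    show "ball x \<rho> \<subseteq> {y. r0 < norm y}" using ball R1 by (auto dest: ball)
    show "\<sigma> * w y t - barrier \<epsilon> \<delta> C R2 y t \<le> \<sigma> * w x t - barrier \<epsilon> \<delta> C R2 x t"
      if "y \<in> ball x \<rho>" for y
      using max[of "(y, t)"] ball[OF that] x by (simp add: K_def z_def less_imp_le)
    show "\<sigma> * w x s - barrier \<epsilon> \<delta> C R2 x s \<le> \<sigma> * w x t - barrier \<epsilon> \<delta> C R2 x t"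
      if "s \<in> {0..t}" for s
      using max[of "(x, s)"] that x by (simp add: K_def z_def)
    show "r0 < norm x" "norm x \<le> R2" "t \<in> {0<..T}" using x interior R1 by auto
  qed (fact sig C \<delta>)+
  moreover have "\<sigma> * f0 x t \<le> \<epsilon>" using f0[of x t] x sig by auto
  ultimately show False using \<epsilon> \<delta> by simp
qed

lemma far_field_bound:
  fixes x :: "real^'n"
  assumes \<epsilon>: "0 < \<epsilon>" and R1: "r0 < R1"
    and M: "\<And>x t. r0 \<le> norm x \<Longrightarrow> t \<in> {0..T} \<Longrightarrow> \<bar>w x t\<bar> \<le> M"
    and w0: "\<And>x. R1 \<le> norm x \<Longrightarrow> \<bar>w0 x\<bar> \<le> \<epsilon>"
    and f0: "\<And>x t. R1 \<le> norm x \<Longrightarrow> t \<in> {0..T} \<Longrightarrow> \<bar>f0 x t\<bar> \<le> \<epsilon>"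
    and x: "R1 \<le> norm x" and t: "t \<in> {0..T}"
  shows "\<bar>w x t\<bar> \<le> 2 * \<epsilon> * (1 + T) + exp (barrier_rate * T) * (\<bar>M\<bar> * exp R1 / blo) * bhi * exp (- norm x)"
proof -
  define C where "C = \<bar>M\<bar> * exp R1 / blo"
  have C: "0 \<le> C" "M \<le> C * blo * exp (- R1)"
    using blo_pos by (auto simp: C_def exp_minus field_simps)
  have r: "r0 < norm x" using x R1 by simp
  have bound: "\<sigma> * w x t \<le> 2 * \<epsilon> * (1 + T) + exp (barrier_rate * T) * C * bhi * exp (- norm x)"
    if sig: "\<sigma> = 1 \<or> \<sigma> = -1" for \<sigma>
  proof (rule le_if_le_add_pos_multiple)
    show "0 \<le> radial_weight (norm x) + (real CARD('n) + Q + 1) * T"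
      using radial_weight_nonneg[of "norm x"] r Q_nonneg T_pos by simp
    fix \<delta> :: real assume \<delta>: "0 < \<delta>"
    define R2 where "R2 = max (norm x) (R1 + \<bar>M\<bar> / (\<delta> * blo * r0))"
    have R2: "norm x \<le> R2" "R1 \<le> R2" using x by (auto simp: R2_def)
    have "\<bar>M\<bar> = \<delta> * (blo * r0 * (\<bar>M\<bar> / (\<delta> * blo * r0)))" using \<delta> blo_pos r0_pos by simp
    also have "\<dots> \<le> \<delta> * (blo * r0 * (R2 - R1))"
      using \<delta> blo_pos r0_pos by (intro mult_left_mono) (auto simp: R2_def)
    also have "\<dots> \<le> \<delta> * radial_weight R2" using radial_weight_growth[OF R1 R2(2)] \<delta> by simp
    finally have outer: "M \<le> \<delta> * radial_weight R2" by simp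
    have "\<sigma> * w x t \<le> barrier \<epsilon> \<delta> C R2 x t"
      by (rule barrier_comparison[OF \<epsilon> \<delta> C(1) sig M w0 f0 C(2) outer R1 x R2(1) t])
    also have "\<dots> \<le> 2 * \<epsilon> * (1 + T) + exp (barrier_rate * T) * C * bhi * exp (- norm x)
        + \<delta> * (radial_weight (norm x) + (real CARD('n) + Q + 1) * T)"
    proof -
      have "0 \<le> barrier_rate" using Q_nonneg r0_pos blo_pos by (simp add: barrier_rate_def)
      then have "exp (barrier_rate * t) * exp_barrier C R2 (norm x) \<le> exp (barrier_rate * T) * (C * bhi * exp (- norm x))"
        using t exp_barrier_nonneg[OF C(1) r R2(1)] exp_barrier_bounds(2)[OF C(1) r R2(1)]
        by (intro mult_mono) (auto simp: mult_left_mono)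
      moreover have "\<delta> * (radial_weight (norm x) + (real CARD('n) + Q + 1) * t)
          \<le> \<delta> * (radial_weight (norm x) + (real CARD('n) + Q + 1) * T)"
        using t \<delta> Q_nonneg by (intro mult_left_mono add_left_mono) auto
      moreover have "2 * \<epsilon> * (1 + t) \<le> 2 * \<epsilon> * (1 + T)" using t \<epsilon> by simp
      ultimately show ?thesis unfolding barrier_def by linarith
    qed
    finally show "\<sigma> * w x t \<le> 2 * \<epsilon> * (1 + T) + exp (barrier_rate * T) * C * bhi * exp (- norm x)
        + \<delta> * (radial_weight (norm x) + (real CARD('n) + Q + 1) * T)" .
  qed
  show ?thesis using bound[of 1] bound[of "-1"] by (simp add: C_def abs_le_iff mult.assoc)
qed

theorem sphere_sup_tendsto_zero:
  assumes M: "\<And>x t. r0 \<le> norm x \<Longrightarrow> t \<in> {0..T} \<Longrightarrow> \<bar>w x t\<bar> \<le> M"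
    and w0: "(w0 \<longlongrightarrow> 0) at_infinity"
    and f0: "\<And>\<epsilon>. 0 < \<epsilon> \<Longrightarrow> \<exists>R. \<forall>x t. R \<le> norm x \<longrightarrow> t \<in> {0..T} \<longrightarrow> \<bar>f0 x t\<bar> \<le> \<epsilon>"
  shows "((\<lambda>r. SUP p\<in>{x::real^'n. norm x = r} \<times> {0..T}. \<bar>w (fst p) (snd p)\<bar>) \<longlongrightarrow> 0) at_top"
proof (rule tendstoI)
  fix e :: real assume e: "0 < e"
  define D where "D = 3 + 2 * T"
  have "0 < D" using T_pos by (simp add: D_def)
  define \<epsilon> where "\<epsilon> = e / (2 * D)"
  have \<epsilon>: "0 < \<epsilon>" "\<epsilon> * D < e" using e \<open>0 < D\<close> by (simp_all add: \<epsilon>_def)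
  obtain Rw where Rw: "\<And>x. Rw \<le> norm x \<Longrightarrow> \<bar>w0 x\<bar> \<le> \<epsilon>"
    using tendstoD[OF w0 \<epsilon>(1)] by (force simp: eventually_at_infinity)
  obtain Rf where Rf: "\<And>x t. Rf \<le> norm x \<Longrightarrow> t \<in> {0..T} \<Longrightarrow> \<bar>f0 x t\<bar> \<le> \<epsilon>"
    using f0[OF \<epsilon>(1)] by blast
  define R1 where "R1 = max (max Rw Rf) (r0 + 1)"
  have R1: "r0 < R1" by (simp add: R1_def)
  have w0_small: "\<bar>w0 x\<bar> \<le> \<epsilon>" if "R1 \<le> norm x" for x using Rw that by (simp add: R1_def)
  have f0_small: "\<bar>f0 x t\<bar> \<le> \<epsilon>" if "R1 \<le> norm x" "t \<in> {0..T}" for x t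
    using Rf that by (simp add: R1_def)
  define K where "K = exp (barrier_rate * T) * (\<bar>M\<bar> * exp R1 / blo) * bhi"
  have "0 \<le> K" using blo_pos beta_bounds[of r0] by (simp add: K_def)
  define R where "R = max R1 (ln ((K + 1) / \<epsilon>))"
  have small: "\<bar>w x t\<bar> \<le> \<epsilon> * D" if x: "R \<le> norm x" and t: "t \<in> {0..T}" for x :: "real^'n" and t
  proof -
    have "ln ((K + 1) / \<epsilon>) \<le> ln (exp (norm x))" using x by (simp add: R_def)
    then have "(K + 1) / \<epsilon> \<le> exp (norm x)"
      using \<open>0 \<le> K\<close> \<epsilon>(1) by (subst (asm) ln_le_cancel_iff) auto
    then have "(K + 1) * exp (- norm x) \<le> \<epsilon>"
      using \<epsilon>(1) by (simp add: exp_minus divide_simps mult.commute)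
    then have "K * exp (- norm x) \<le> \<epsilon>" by (simp add: distrib_right add_increasing2 order.trans[rotated])
    moreover have "\<bar>w x t\<bar> \<le> 2 * \<epsilon> * (1 + T) + K * exp (- norm x)"
      using far_field_bound[OF \<epsilon>(1) R1 M w0_small f0_small _ t] x by (simp add: R_def K_def)
    ultimately show ?thesis by (simp add: D_def algebra_simps)
  qed
  show "\<forall>\<^sub>F r in at_top. dist (SUP p\<in>{x::real^'n. norm x = r} \<times> {0..T}. \<bar>w (fst p) (snd p)\<bar>) 0 < e"
    unfolding eventually_at_top_linorder
  proof (intro exI allI impI)
    fix r assume r: "max R 0 \<le> r"
    define S where "S = {x::real^'n. norm x = r} \<times> {0..T}"
    obtain i :: 'n where True by blast
    have "(r *\<^sub>R axis i 1, 0) \<in> S" using r T_pos by (simp add: S_def)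
    then have "\<bar>SUP p\<in>S. \<bar>w (fst p) (snd p)\<bar>\<bar> \<le> \<epsilon> * D"
      by (rule abs_SUP_abs_le) (use small r in \<open>auto simp: S_def\<close>)
    then show "dist (SUP p\<in>{x::real^'n. norm x = r} \<times> {0..T}. \<bar>w (fst p) (snd p)\<bar>) 0 < e"
      using \<epsilon>(2) by (simp add: S_def[symmetric] dist_real_def)
  qed
qed

end

section \<open>The coefficients of the two-phase flow problem\<close>

lemma reciprocal_product_bounds:
  fixes p f :: "real \<Rightarrow> real"
  assumes diff: "\<And>s. s \<in> {a..b} \<Longrightarrow> p differentiable (at s) \<and> f differentiable (at s)"
    and cont: "continuous_on {a..b} (deriv p)" "continuous_on {a..b} (deriv f)"
    and pos: "\<And>s. s \<in> {a..b} \<Longrightarrow> p s * f s > 0"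
  shows "\<exists>lo hi D. 0 < lo \<and> (\<forall>s\<in>{a..b}. lo \<le> 1 / (p s * f s) \<and> 1 / (p s * f s) \<le> hi
           \<and> \<bar>deriv (\<lambda>s. 1 / (p s * f s)) s\<bar> \<le> D)"
proof (cases "a \<le> b")
  case True
  have "continuous_on {a..b} p" "continuous_on {a..b} f"
    using diff by (auto intro!: continuous_at_imp_continuous_on differentiable_imp_continuous_within)
  then have cq: "continuous_on {a..b} (\<lambda>s. p s * f s)" by (intro continuous_intros)
  obtain m where m: "m \<in> {a..b}" "\<forall>s\<in>{a..b}. p m * f m \<le> p s * f s"
    using continuous_attains_inf[OF compact_Icc _ cq] True by auto
  obtain M where M: "M \<in> {a..b}" "\<forall>s\<in>{a..b}. p s * f s \<le> p M * f M"
    using continuous_attains_sup[OF compact_Icc _ cq] True by auto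
  define d where "d s = - (deriv p s * f s + p s * deriv f s) / (p s * f s)\<^sup>2" for s
  have "continuous_on {a..b} d"
    unfolding d_def using cont cq \<open>continuous_on {a..b} p\<close> \<open>continuous_on {a..b} f\<close>
    by (intro continuous_intros) (use pos in force)+
  then obtain D where D: "\<forall>s\<in>{a..b}. \<bar>d s\<bar> \<le> D"
    using compact_imp_bounded[OF compact_continuous_image[OF _ compact_Icc]] by (force simp: bounded_real)
  have "deriv (\<lambda>s. 1 / (p s * f s)) s = d s" if s: "s \<in> {a..b}" for s
  proof (rule DERIV_imp_deriv)
    have "(p has_real_derivative deriv p s) (at s)" "(f has_real_derivative deriv f s) (at s)"
      using diff[OF s] by (simp_all add: DERIV_deriv_iff_real_differentiable)
    then show "((\<lambda>s. 1 / (p s * f s)) has_real_derivative d s) (at s)"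
      using pos[OF s] unfolding d_def
      by (auto intro!: derivative_eq_intros simp: field_simps power2_eq_square)
  qed
  moreover have "1 / (p M * f M) \<le> 1 / (p s * f s) \<and> 1 / (p s * f s) \<le> 1 / (p m * f m)"
    if "s \<in> {a..b}" for s
    using m M pos[OF that] pos[OF m(1)] that by (simp add: frac_le)
  moreover have "0 < 1 / (p M * f M)" using pos[OF M(1)] by simp
  ultimately show ?thesis
    using D by (rule_tac exI[of _ "1 / (p M * f M)"], rule_tac exI[of _ "1 / (p m * f m)"], rule_tac exI[of _ D]) simp
next
  case False
  then show ?thesis by (intro exI[of _ 1]) simp
qed

lemma gfun_has_real_derivative:
  assumes "s > 0"
  shows "(gfun a0 a al N has_real_derivative (\<Sum>j=1..N. al j * s powr (al j - 1) * a j)) (at s)"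
  unfolding gfun_def[abs_def] using assms by (auto intro!: derivative_eq_intros DERIV_sum)

lemma gfun_deriv_mult:
  assumes "s > 0"
  shows "deriv (gfun a0 a al N) s * s = gfun 0 (\<lambda>j. a j * al j) al N s"
proof -
  have "(\<Sum>j=1..N. al j * s powr (al j - 1) * a j * s) = (\<Sum>j=1..N. a j * al j * s powr al j)"
    using assms by (intro sum.cong) (simp_all add: powr_diff)
  then show ?thesis
    by (simp add: DERIV_imp_deriv[OF gfun_has_real_derivative[OF assms]] gfun_def sum_distrib_right)
qed

lemma gfun_admissible_bounds:
  assumes "g_admissible a0 a al N" "0 \<le> s" "s \<le> t"
  shows "a0 \<le> gfun a0 a al N s" "gfun a0 a al N s \<le> gfun a0 a al N t"
    and "0 \<le> gfun 0 (\<lambda>j. a j * al j) al N s"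
    and "gfun 0 (\<lambda>j. a j * al j) al N s \<le> gfun 0 (\<lambda>j. a j * al j) al N t"
proof -
  have "\<forall>j\<in>{1..N}. a j \<ge> 0" "\<forall>j\<in>{1..N}. al j \<ge> 0" "\<forall>j\<in>{1..N}. a j * al j \<ge> 0"
    using assms(1) by (auto simp: g_admissible_def less_imp_le)
  with assms(2,3) show "a0 \<le> gfun a0 a al N s" "gfun a0 a al N s \<le> gfun a0 a al N t"
    "0 \<le> gfun 0 (\<lambda>j. a j * al j) al N s"
    "gfun 0 (\<lambda>j. a j * al j) al N s \<le> gfun 0 (\<lambda>j. a j * al j) al N t"
    unfolding gfun_def by (auto intro!: sum_nonneg sum_mono mult_left_mono powr_mono2)
qed

lemma gfun_power_differentiable:
  assumes "r > 0" "k \<ge> 0"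
  shows "(\<lambda>r. gfun a0 a al N (k * r powr p)) differentiable (at r)"
proof (cases "k = 0")
  case False
  then have "\<exists>D. ((\<lambda>r. gfun a0 a al N (k * r powr p)) has_real_derivative D) (at r)"
    unfolding gfun_def using assms by (intro exI) (auto intro!: derivative_eq_intros DERIV_sum)
  then show ?thesis by (simp add: real_differentiable_def)
qed simp

text \<open>Here \<open>gd s = s g'(s)\<close>, which extends continuously by \<open>gd 0 = 0\<close>.\<close>
lemma Gjac_scaleR_mult_vec:
  fixes y v :: "real^'n"
  assumes y: "y \<noteq> 0" and gd: "\<forall>s>0. deriv g s * s = gd s" "gd 0 = 0"
  shows "Gjac g (k *\<^sub>R y) *v v
    = g (\<bar>k\<bar> * norm y) *\<^sub>R v + (gd (\<bar>k\<bar> * norm y) / (norm y)\<^sup>2 * (y \<bullet> v)) *\<^sub>R y"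
proof (cases "k = 0")
  case True
  then show ?thesis by (simp add: Gjac_def gd scaleR_matrix_vector_assoc[symmetric])
next
  case False
  define s where "s = \<bar>k\<bar> * norm y"
  have s: "s > 0" using False y by (simp add: s_def)
  have "Gjac g (k *\<^sub>R y) *v v = g s *\<^sub>R v + (deriv g s / s * (k\<^sup>2 * (y \<bullet> v))) *\<^sub>R y"
    using False y by (simp add: s_def Gjac_def matrix_vector_mult_add_rdistrib
        scaleR_matrix_vector_assoc[symmetric] outer_mult_vec power2_eq_square algebra_simps)
  also have "deriv g s / s * (k\<^sup>2 * (y \<bullet> v)) = gd s / (norm y)\<^sup>2 * (y \<bullet> v)"
  proof -
    have "k\<^sup>2 = s\<^sup>2 / (norm y)\<^sup>2" using y by (simp add: s_def power_mult_distrib)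
    then show ?thesis
      using s by (simp add: power2_eq_square field_simps flip: gd(1)[rule_format, OF s])
  qed
  finally show ?thesis by (simp add: s_def)
qed

text \<open>In the exterior domain, \<open>B(y)\<close> has
  the eigenvalue \<open>alpha |y|\<close> on \<open>y\<^sup>\<bottom>\<close> and \<open>beta |y|\<close> in the direction of \<open>y\<close>; \<open>flux_norm c |y|\<close> is
  the length of the Darcy velocity \<open>c |y|\<^sup>-\<^sup>n y\<close>.\<close>
locale two_phase_coefficients =
  fixes a10 a20 :: real and a1 a2 al1 al2 :: "nat \<Rightarrow> real" and N1 N2 :: nat
    and f1 f2 pcd :: "real \<Rightarrow> real" and r0 c1 c2 slo shi :: real and Shat :: "real \<Rightarrow> real"
    and n :: real and g1 g2 F1 F2 :: "real \<Rightarrow> real"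
    and Sstar :: "real^'n::finite \<Rightarrow> real" and u1 u2 b :: "real^'n \<Rightarrow> real^'n"
    and B A :: "real^'n \<Rightarrow> real^'n^'n"
  assumes n_def: "n = real CARD('n)" and dim: "CARD('n) \<ge> 2"
    and g1_def: "g1 = gfun a10 a1 al1 N1" and g2_def: "g2 = gfun a20 a2 al2 N2"
    and F1_def: "F1 = (\<lambda>s. 1 / (pcd s * f1 s))" and F2_def: "F2 = (\<lambda>s. 1 / (pcd s * f2 s))"
    and Sstar_def: "Sstar = (\<lambda>x::real^'n. Shat (norm x))"
    and u1_def: "u1 = (\<lambda>x::real^'n. (c1 * norm x powr (- n)) *\<^sub>R x)"
    and u2_def: "u2 = (\<lambda>x::real^'n. (c2 * norm x powr (- n)) *\<^sub>R x)"
    and B_def: "B = (\<lambda>x. F1 (Sstar x) *\<^sub>R Gjac g1 (u1 x) + F2 (Sstar x) *\<^sub>R Gjac g2 (u2 x))"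
    and A_def: "A = (\<lambda>x. matrix_inv (B x))"
    and b_def: "b = (\<lambda>x. deriv F2 (Sstar x) *\<^sub>R (g2 (norm (u2 x)) *\<^sub>R u2 x)
                 - deriv F1 (Sstar x) *\<^sub>R (g1 (norm (u1 x)) *\<^sub>R u1 x))"
    and g1_adm: "g_admissible a10 a1 al1 N1" and g2_adm: "g_admissible a20 a2 al2 N2"
    and f1_cont: "continuous_on {0..1} f1" and f2_cont: "continuous_on {0..1} f2"
    and f1_diff: "\<forall>s\<in>{0<..<1}. f1 differentiable (at s)"
    and f2_diff: "\<forall>s\<in>{0<..<1}. f2 differentiable (at s)"
    and f1_C1: "continuous_on {0<..<1} (deriv f1)" and f2_C1: "continuous_on {0<..<1} (deriv f2)"
    and f1_0: "f1 0 = 0" and f2_1: "f2 1 = 0"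
    and f1_mono: "\<forall>s\<in>{0<..<1}. deriv f1 s > 0" and f2_mono: "\<forall>s\<in>{0<..<1}. deriv f2 s < 0"
    and pcd_diff: "\<forall>s\<in>{0<..<1}. pcd differentiable (at s)"
    and pcd_C1: "continuous_on {0<..<1} (deriv pcd)"
    and pcd_pos: "\<forall>s\<in>{0<..<1}. pcd s > 0"
    and r0_pos: "r0 > 0"
    and Shat_differentiable: "\<forall>r\<ge>r0. Shat differentiable (at r within {r0..})"
    and Shat_bounds: "0 < slo" "shi < 1" "\<forall>r\<ge>r0. slo \<le> Shat r \<and> Shat r \<le> shi"

begin

definition flux_norm :: "real \<Rightarrow> real \<Rightarrow> real" where "flux_norm c r = \<bar>c\<bar> * r powr (1 - n)"

text \<open>\<open>g1d s = s g1'(s)\<close> and \<open>g2d s = s g2'(s)\<close>.\<close>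
definition g1d :: "real \<Rightarrow> real" where "g1d = gfun 0 (\<lambda>j. a1 j * al1 j) al1 N1"

definition g2d :: "real \<Rightarrow> real" where "g2d = gfun 0 (\<lambda>j. a2 j * al2 j) al2 N2"

definition alpha :: "real \<Rightarrow> real" where
  "alpha r = F1 (Shat r) * g1 (flux_norm c1 r) + F2 (Shat r) * g2 (flux_norm c2 r)"

definition theta :: "real \<Rightarrow> real" where
  "theta r = F1 (Shat r) * g1d (flux_norm c1 r) + F2 (Shat r) * g2d (flux_norm c2 r)"

definition beta :: "real \<Rightarrow> real" where "beta r = alpha r + theta r"

lemma Shat_range: "r0 \<le> r \<Longrightarrow> Shat r \<in> {slo..shi}"
  using Shat_bounds by force

lemma Shat_unit_interval: "r0 \<le> r \<Longrightarrow> 0 < Shat r \<and> Shat r < 1"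
  using Shat_bounds by force

lemma f1_pos: assumes "0 < s" "s < 1" shows "f1 s > 0"
proof -
  obtain l z where z: "0 < z" "z < s" "DERIV f1 z :> l" "f1 s - f1 0 = (s - 0) * l"
    using MVT[of 0 s f1] assms f1_diff continuous_on_subset[OF f1_cont, of "{0..s}"] by force
  have "l > 0" using DERIV_imp_deriv[OF z(3)] f1_mono z assms by auto
  then show ?thesis using z assms f1_0 by simp
qed

lemma f2_pos: assumes "0 < s" "s < 1" shows "f2 s > 0"
proof -
  obtain l z where z: "s < z" "z < 1" "DERIV f2 z :> l" "f2 1 - f2 s = (1 - s) * l"
    using MVT[of s 1 f2] assms f2_diff continuous_on_subset[OF f2_cont, of "{s..1}"] by force
  have "l < 0" using DERIV_imp_deriv[OF z(3)] f2_mono z assms by auto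
  then have "(1 - s) * l < 0" using assms by (simp add: mult_pos_neg)
  then show ?thesis using z assms f2_1 by simp
qed

lemma F_differentiable:
  assumes "0 < s" "s < 1"
  shows "F1 differentiable (at s)" "F2 differentiable (at s)"
proof -
  have "pcd s > 0" "f1 s > 0" "f2 s > 0" using assms pcd_pos f1_pos f2_pos by auto
  then show "F1 differentiable (at s)" "F2 differentiable (at s)"
    unfolding F1_def F2_def using assms pcd_diff f1_diff f2_diff
    by (auto intro!: differentiable_divide differentiable_mult)
qed

lemma F_bounds:
  "\<exists>Flo Fhi DF. 0 < Flo \<and> (\<forall>s\<in>{slo..shi}. Flo \<le> F1 s \<and> F1 s \<le> Fhi \<and> Flo \<le> F2 s \<and> F2 s \<le> Fhi
      \<and> \<bar>deriv F1 s\<bar> \<le> DF \<and> \<bar>deriv F2 s\<bar> \<le> DF)"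
proof -
  have sub: "{slo..shi} \<subseteq> {0<..<1}" using Shat_bounds by auto
  have "\<exists>lo hi D. 0 < lo \<and> (\<forall>s\<in>{slo..shi}. lo \<le> 1 / (pcd s * f s) \<and> 1 / (pcd s * f s) \<le> hi
           \<and> \<bar>deriv (\<lambda>s. 1 / (pcd s * f s)) s\<bar> \<le> D)"
    if "\<forall>s\<in>{0<..<1}. f differentiable (at s)" "continuous_on {0<..<1} (deriv f)"
      "\<And>s. 0 < s \<Longrightarrow> s < 1 \<Longrightarrow> f s > 0" for f
    using sub that pcd_diff pcd_pos
    by (intro reciprocal_product_bounds continuous_on_subset[OF pcd_C1] continuous_on_subset[OF that(2)])
      (auto intro!: mult_pos_pos)
  from this[OF f1_diff f1_C1 f1_pos] this[OF f2_diff f2_C1 f2_pos]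
  obtain lo1 hi1 D1 lo2 hi2 D2 where "0 < lo1" "0 < lo2"
    "\<forall>s\<in>{slo..shi}. lo1 \<le> F1 s \<and> F1 s \<le> hi1 \<and> \<bar>deriv F1 s\<bar> \<le> D1"
    "\<forall>s\<in>{slo..shi}. lo2 \<le> F2 s \<and> F2 s \<le> hi2 \<and> \<bar>deriv F2 s\<bar> \<le> D2"
    unfolding F1_def F2_def by blast
  then show ?thesis
    by (rule_tac exI[of _ "min lo1 lo2"], rule_tac exI[of _ "max hi1 hi2"], rule_tac exI[of _ "max D1 D2"])
      (simp add: le_max_iff_disj min_le_iff_disj)
qed

lemma g_bounds:
  assumes "0 \<le> s" "s \<le> t"
  shows "a10 \<le> g1 s" "g1 s \<le> g1 t" "0 \<le> g1d s" "g1d s \<le> g1d t"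
    and "a20 \<le> g2 s" "g2 s \<le> g2 t" "0 \<le> g2d s" "g2d s \<le> g2d t"
  unfolding g1_def g1d_def g2_def g2d_def
  using gfun_admissible_bounds[OF g1_adm assms] gfun_admissible_bounds[OF g2_adm assms] by simp_all

lemma g_pos: "0 \<le> s \<Longrightarrow> 0 < g1 s \<and> 0 < g2 s"
  using g_bounds(1,5)[of s s] g1_adm g2_adm by (auto simp: g_admissible_def)

lemma flux_norm_le: "r0 \<le> r \<Longrightarrow> flux_norm c r \<le> flux_norm c r0"
  unfolding flux_norm_def using r0_pos dim n_def by (auto intro!: mult_left_mono powr_mono2')

lemma flux_norm_nonneg: "flux_norm c r \<ge> 0"
  by (simp add: flux_norm_def)

lemma beta_bounds:
  "\<exists>blo bhi. 0 < blo \<and> (\<forall>r\<ge>r0. blo \<le> alpha r \<and> alpha r \<le> beta r \<and> beta r \<le> bhi)"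
proof -
  obtain Flo Fhi where F: "0 < Flo" "\<forall>s\<in>{slo..shi}. Flo \<le> F1 s \<and> F1 s \<le> Fhi \<and> Flo \<le> F2 s \<and> F2 s \<le> Fhi"
    using F_bounds by blast
  define bhi where "bhi = Fhi * (g1 (flux_norm c1 r0) + g1d (flux_norm c1 r0)
                               + g2 (flux_norm c2 r0) + g2d (flux_norm c2 r0))"
  have "Flo * (a10 + a20) \<le> alpha r \<and> alpha r \<le> beta r \<and> beta r \<le> bhi" if r: "r \<ge> r0" for r
  proof -
    have Fr: "Flo \<le> F1 (Shat r)" "F1 (Shat r) \<le> Fhi" "Flo \<le> F2 (Shat r)" "F2 (Shat r) \<le> Fhi"
      using F(2) Shat_range[OF r] by blast+
    note G = g_bounds[OF flux_norm_nonneg flux_norm_le[OF r]]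
    have a0: "0 < a10" "0 < a20" using g1_adm g2_adm by (simp_all add: g_admissible_def)
    have "0 \<le> g1 (flux_norm c1 r)" "0 \<le> g2 (flux_norm c2 r)"
      using g_pos[OF flux_norm_nonneg] by (simp_all add: less_imp_le)
    then have "Flo * a10 \<le> F1 (Shat r) * g1 (flux_norm c1 r)" "Flo * a20 \<le> F2 (Shat r) * g2 (flux_norm c2 r)"
      "F1 (Shat r) * g1 (flux_norm c1 r) \<le> Fhi * g1 (flux_norm c1 r0)"
      "F2 (Shat r) * g2 (flux_norm c2 r) \<le> Fhi * g2 (flux_norm c2 r0)"
      "F1 (Shat r) * g1d (flux_norm c1 r) \<le> Fhi * g1d (flux_norm c1 r0)"
      "F2 (Shat r) * g2d (flux_norm c2 r) \<le> Fhi * g2d (flux_norm c2 r0)"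
      using F(1) Fr G a0 by (auto intro!: mult_mono)
    moreover have "0 \<le> theta r" unfolding theta_def using F(1) Fr G by auto
    ultimately show ?thesis unfolding beta_def alpha_def theta_def bhi_def by (simp add: algebra_simps)
  qed
  moreover have "0 < Flo * (a10 + a20)" using F(1) g1_adm g2_adm by (simp add: g_admissible_def)
  ultimately show ?thesis by blast
qed

lemma F_Shat_continuous:
  assumes "r0 \<le> r"
  shows "continuous (at r within {r0..}) (\<lambda>r. F1 (Shat r))" "continuous (at r within {r0..}) (\<lambda>r. F2 (Shat r))"
proof -
  have "0 < Shat r" "Shat r < 1" using Shat_unit_interval[OF assms] by auto
  then have F: "isCont F1 (Shat r)" "isCont F2 (Shat r)"
    using F_differentiable differentiable_imp_continuous_within by blast+
  have "continuous (at r within {r0..}) Shat"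
    using Shat_differentiable assms differentiable_imp_continuous_within by blast
  then show "continuous (at r within {r0..}) (\<lambda>r. F1 (Shat r))"
    "continuous (at r within {r0..}) (\<lambda>r. F2 (Shat r))"
    by (rule continuous_within_compose3[where g = F1 and f = Shat, OF F(1)],
        rule continuous_within_compose3[where g = F2 and f = Shat, OF F(2)])
qed

lemma F_Shat_differentiable:
  assumes "r0 < r"
  shows "(\<lambda>r. F1 (Shat r)) differentiable (at r)" "(\<lambda>r. F2 (Shat r)) differentiable (at r)"
proof -
  have "at r within {r0..} = at r" by (rule at_within_interior) (use assms in simp)
  then have "Shat differentiable (at r)" using Shat_differentiable assms by (metis less_imp_le)
  moreover have "F1 differentiable (at (Shat r))" "F2 differentiable (at (Shat r))"
    using Shat_unit_interval[of r] F_differentiable assms by force+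
  ultimately show "(\<lambda>r. F1 (Shat r)) differentiable (at r)" "(\<lambda>r. F2 (Shat r)) differentiable (at r)"
    using differentiable_chain_at[of Shat r] by (simp_all add: o_def)
qed

lemma g_flux_norm_differentiable:
  assumes "0 < r"
  shows "(\<lambda>r. g1 (flux_norm c r)) differentiable (at r)" "(\<lambda>r. g2 (flux_norm c r)) differentiable (at r)"
    "(\<lambda>r. g1d (flux_norm c r)) differentiable (at r)" "(\<lambda>r. g2d (flux_norm c r)) differentiable (at r)"
  unfolding g1_def g2_def g1d_def g2d_def flux_norm_def using assms
  by (auto intro!: gfun_power_differentiable)

lemma alpha_beta_differentiable:
  assumes "r0 < r"
  shows "alpha differentiable (at r)" "beta differentiable (at r)"
proof -
  note F = F_Shat_differentiable[OF assms]
  have "0 < r" using assms r0_pos by simp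
  note G = g_flux_norm_differentiable[OF this]
  have "alpha differentiable (at r)" "theta differentiable (at r)"
    unfolding alpha_def[abs_def] theta_def[abs_def]
    by (intro differentiable_add differentiable_mult F G)+
  then show "alpha differentiable (at r)" "beta differentiable (at r)"
    unfolding beta_def[abs_def] by (simp_all add: differentiable_add)
qed

lemma beta_continuous: "continuous_on {r0..} beta"
proof -
  have "continuous (at r within {r0..}) beta" if r: "r \<ge> r0" for r
  proof -
    have "0 < r" using r r0_pos by simp
    note G = g_flux_norm_differentiable[OF this, THEN differentiable_imp_continuous_within,
        THEN continuous_at_imp_continuous_at_within]
    show ?thesis
      unfolding beta_def[abs_def] alpha_def[abs_def] theta_def[abs_def]
      by (intro continuous_add continuous_mult F_Shat_continuous[OF r] G)
  qed
  then show ?thesis by (simp add: continuous_on_eq_continuous_within)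
qed

lemma flux_norm_eq: "y \<noteq> 0 \<Longrightarrow> \<bar>c * norm y powr (- n)\<bar> * norm y = flux_norm c (norm y)"
  by (simp add: flux_norm_def abs_mult powr_diff[of "norm y" 1 n] field_simps powr_minus)

lemma B_mult_vec:
  assumes "y \<noteq> 0"
  shows "B y *v v = alpha (norm y) *\<^sub>R v + (theta (norm y) / (norm y)\<^sup>2 * (y \<bullet> v)) *\<^sub>R y"
proof -
  have gd: "\<forall>s>0. deriv g1 s * s = g1d s" "g1d 0 = 0" "\<forall>s>0. deriv g2 s * s = g2d s" "g2d 0 = 0"
    by (simp_all add: g1_def g1d_def g2_def g2d_def gfun_deriv_mult) (simp_all add: gfun_def)
  have "B y *v v = F1 (Shat (norm y)) *\<^sub>R (Gjac g1 (u1 y) *v v) + F2 (Shat (norm y)) *\<^sub>R (Gjac g2 (u2 y) *v v)"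
    by (simp add: B_def Sstar_def matrix_vector_mult_add_rdistrib scaleR_matrix_vector_assoc)
  then show ?thesis unfolding u1_def u2_def
    using Gjac_scaleR_mult_vec[OF assms gd(1,2)] Gjac_scaleR_mult_vec[OF assms gd(3,4)] flux_norm_eq[OF assms]
    by (simp add: alpha_def theta_def algebra_simps add_divide_distrib)
qed

lemma A_mult_vec:
  assumes "r0 \<le> norm y"
  shows "A y *v v = (1 / alpha (norm y)) *\<^sub>R v
     + ((1 / beta (norm y) - 1 / alpha (norm y)) / (norm y)\<^sup>2 * (y \<bullet> v)) *\<^sub>R y"
proof -
  have y: "y \<noteq> 0" using assms r0_pos by auto
  obtain blo where "0 < blo" "blo \<le> alpha (norm y)" "alpha (norm y) \<le> beta (norm y)"
    using beta_bounds assms by blast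
  then have "alpha (norm y) \<noteq> 0" "alpha (norm y) + theta (norm y) \<noteq> 0"
    unfolding beta_def by linarith+
  then show ?thesis
    unfolding A_def beta_def by (rule matrix_inv_scaled_identity_plus_projection[OF y _ _ B_mult_vec[OF y]])
qed

lemma b_inner_bounded: "\<exists>Q. \<forall>y. r0 \<le> norm y \<longrightarrow> \<bar>b y \<bullet> y\<bar> \<le> Q"
proof -
  obtain DF where DF: "\<forall>s\<in>{slo..shi}. \<bar>deriv F1 s\<bar> \<le> DF \<and> \<bar>deriv F2 s\<bar> \<le> DF"
    using F_bounds by blast
  define Q where "Q = DF * (g2 (flux_norm c2 r0) * \<bar>c2\<bar> + g1 (flux_norm c1 r0) * \<bar>c1\<bar>) * r0 powr (2 - n)"
  have "\<bar>b y \<bullet> y\<bar> \<le> Q" if y: "r0 \<le> norm y" for y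
  proof -
    define r where "r = norm y"
    have r: "r > 0" "r0 \<le> r" using y r0_pos by (auto simp: r_def)
    define D1 where "D1 = deriv F1 (Shat r)"
    define D2 where "D2 = deriv F2 (Shat r)"
    have D: "\<bar>D1\<bar> \<le> DF" "\<bar>D2\<bar> \<le> DF" using DF Shat_range[OF r(2)] by (auto simp: D1_def D2_def)
    have nu: "norm (u1 y) = flux_norm c1 r" "norm (u2 y) = flux_norm c2 r"
      using flux_norm_eq[of y] r by (auto simp: u1_def u2_def r_def)
    have rr: "r powr (- n) * (y \<bullet> y) = r powr (2 - n)"
    proof -
      have "y \<bullet> y = r powr 2" using r by (simp add: r_def power2_norm_eq_inner[symmetric] powr_numeral)
      then show ?thesis by (simp add: powr_add[symmetric])
    qed
    have "b y \<bullet> y = D2 * (g2 (flux_norm c2 r) * (c2 * r powr (- n) * (y \<bullet> y)))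
        - D1 * (g1 (flux_norm c1 r) * (c1 * r powr (- n) * (y \<bullet> y)))"
      unfolding b_def Sstar_def nu unfolding u1_def u2_def
      by (simp only: inner_diff_left inner_scaleR_left D1_def D2_def r_def mult.assoc)
    then have eq: "b y \<bullet> y = D2 * g2 (flux_norm c2 r) * (c2 * r powr (2 - n))
        - D1 * g1 (flux_norm c1 r) * (c1 * r powr (2 - n))"
      by (simp only: rr mult.assoc)
    note G = g_bounds(2,6)[OF flux_norm_nonneg flux_norm_le[OF r(2)]]
    have g0: "0 \<le> g1 (flux_norm c1 r)" "0 \<le> g2 (flux_norm c2 r)"
      "0 \<le> g1 (flux_norm c1 r0)" "0 \<le> g2 (flux_norm c2 r0)"
      using g_pos[OF flux_norm_nonneg] by (simp_all add: less_imp_le)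
    have pw: "r powr (2 - n) \<le> r0 powr (2 - n)" using r r0_pos dim n_def by (intro powr_mono2') auto
    have "\<bar>b y \<bullet> y\<bar> \<le> \<bar>D2\<bar> * g2 (flux_norm c2 r) * (\<bar>c2\<bar> * r powr (2 - n))
        + \<bar>D1\<bar> * g1 (flux_norm c1 r) * (\<bar>c1\<bar> * r powr (2 - n))"
      unfolding eq by (rule order.trans[OF abs_triangle_ineq4]) (simp add: abs_mult g0)
    also have "\<dots> \<le> DF * g2 (flux_norm c2 r0) * (\<bar>c2\<bar> * r0 powr (2 - n))
        + DF * g1 (flux_norm c1 r0) * (\<bar>c1\<bar> * r0 powr (2 - n))"
      using D G g0 pw by (intro add_mono mult_mono mult_nonneg_nonneg) auto
    finally show ?thesis by (simp add: Q_def algebra_simps)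
  qed
  then show ?thesis by blast
qed

lemma ex_radial_exterior_problem:
  assumes "0 < T" "C21 {x. r0 < norm x} T w"
    and "continuous_on ({x. r0 \<le> norm x} \<times> {0..T}) (\<lambda>(x, t). w x t)"
    and "\<And>x t. r0 < norm x \<Longrightarrow> t \<in> {0<..T} \<Longrightarrow> Lop A b T w x t = f0 x t"
    and "\<And>x. r0 < norm x \<Longrightarrow> w x 0 = w0 x"
  shows "\<exists>Q blo bhi. radial_exterior_problem r0 T Q blo bhi alpha beta A b w f0 w0"
proof -
  obtain blo bhi where beta: "0 < blo" "\<forall>r\<ge>r0. blo \<le> alpha r \<and> alpha r \<le> beta r \<and> beta r \<le> bhi"
    using beta_bounds by blast
  then have "\<And>r. r0 \<le> r \<Longrightarrow> 0 < alpha r" "\<And>r. r0 \<le> r \<Longrightarrow> blo \<le> beta r \<and> beta r \<le> bhi"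
    by force+
  moreover obtain Q where "\<forall>y. r0 \<le> norm y \<longrightarrow> \<bar>b y \<bullet> y\<bar> \<le> Q" using b_inner_bounded by blast
  ultimately have "radial_exterior_problem r0 T Q blo bhi alpha beta A b w f0 w0"
    using beta(1) assms
    by unfold_locales (simp_all add: r0_pos alpha_beta_differentiable beta_continuous A_mult_vec)
  then show ?thesis by blast
qed

end

theorem theorem5p8:
  fixes a10 a20 :: real and a1 a2 al1 al2 :: "nat \<Rightarrow> real" and N1 N2 :: nat
    and f1 f2 pcd :: "real \<Rightarrow> real"
    and r0 c1 c2 s0 slo shi T :: real and Shat :: "real \<Rightarrow> real"
    and f0 w :: "real^'n::finite \<Rightarrow> real \<Rightarrow> real" and w0 :: "real^'n \<Rightarrow> real"
    and G :: "real^'n \<Rightarrow> real \<Rightarrow> real"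
    and n :: real and g1 g2 F1 F2 :: "real \<Rightarrow> real"
    and Sstar :: "real^'n \<Rightarrow> real" and u1 u2 b :: "real^'n \<Rightarrow> real^'n"
    and B A :: "real^'n \<Rightarrow> real^'n^'n" and U :: "(real^'n) set"
  assumes n_def: "n = real CARD('n)"
    and g1_def: "g1 = gfun a10 a1 al1 N1" and g2_def: "g2 = gfun a20 a2 al2 N2"
    and F1_def: "F1 = (\<lambda>s. 1 / (pcd s * f1 s))" and F2_def: "F2 = (\<lambda>s. 1 / (pcd s * f2 s))"
    and Sstar_def: "Sstar = (\<lambda>x::real^'n. Shat (norm x))"
    and u1_def: "u1 = (\<lambda>x::real^'n. (c1 * norm x powr (- n)) *\<^sub>R x)"
    and u2_def: "u2 = (\<lambda>x::real^'n. (c2 * norm x powr (- n)) *\<^sub>R x)"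
    and B_def: "B = (\<lambda>x. F1 (Sstar x) *\<^sub>R Gjac g1 (u1 x) + F2 (Sstar x) *\<^sub>R Gjac g2 (u2 x))"
    and A_def: "A = (\<lambda>x. matrix_inv (B x))"
    and b_def: "b = (\<lambda>x. deriv F2 (Sstar x) *\<^sub>R (g2 (norm (u2 x)) *\<^sub>R u2 x)
                 - deriv F1 (Sstar x) *\<^sub>R (g1 (norm (u1 x)) *\<^sub>R u1 x))"
    and U_def: "U = {x::real^'n. norm x > r0}"
    and dim: "CARD('n) \<ge> 2"
    and g1_adm: "g_admissible a10 a1 al1 N1" and g2_adm: "g_admissible a20 a2 al2 N2"
    and f1_cont: "continuous_on {0..1} f1" and f2_cont: "continuous_on {0..1} f2"
    and f1_diff: "\<forall>s\<in>{0<..<1}. f1 differentiable (at s)"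
    and f2_diff: "\<forall>s\<in>{0<..<1}. f2 differentiable (at s)"
    and f1_C1: "continuous_on {0<..<1} (deriv f1)" and f2_C1: "continuous_on {0<..<1} (deriv f2)"
    and f1_0: "f1 0 = 0" and f2_1: "f2 1 = 0"
    and f1_mono: "\<forall>s\<in>{0<..<1}. deriv f1 s > 0" and f2_mono: "\<forall>s\<in>{0<..<1}. deriv f2 s < 0"
    and pcd_diff: "\<forall>s\<in>{0<..<1}. pcd differentiable (at s)"
    and pcd_C1: "continuous_on {0<..<1} (deriv pcd)"
    and pcd_pos: "\<forall>s\<in>{0<..<1}. pcd s > 0"
    and r0_pos: "r0 > 0" and c_nz: "c1\<^sup>2 + c2\<^sup>2 > 0" and s0: "0 < s0" "s0 < 1"
    and Shat_ode: "\<forall>r\<ge>r0. (Shat has_real_derivative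
          (g2 \<bar>c2 * r powr (1 - n)\<bar> * (c2 * r powr (1 - n)) * F2 (Shat r)
           - g1 \<bar>c1 * r powr (1 - n)\<bar> * (c1 * r powr (1 - n)) * F1 (Shat r))) (at r within {r0..})"
    and Shat_init: "Shat r0 = s0"
    and Shat_bounds: "0 < slo" "shi < 1" "\<forall>r\<ge>r0. slo \<le> Shat r \<and> Shat r \<le> shi"
    and T_pos: "T > 0"
    and f0_cont: "continuous_on (closure U \<times> {0..T}) (\<lambda>(x,t). f0 x t)"
    and w0_cont: "continuous_on (closure U) w0"
    and G_cont: "continuous_on ({x. norm x = r0} \<times> {0..T}) (\<lambda>(x,t). G x t)"
    and w_C21: "C21 U T w"
    and w_cont: "continuous_on (closure U \<times> {0..T}) (\<lambda>(x,t). w x t)"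
    and w_bdd: "\<exists>M. \<forall>x\<in>closure U. \<forall>t\<in>{0..T}. \<bar>w x t\<bar> \<le> M"
    and w_eq: "\<forall>x\<in>U. \<forall>t\<in>{0<..T}. Lop A b T w x t = f0 x t"
    and w_init: "\<forall>x\<in>U. w x 0 = w0 x"
    and w_bdry: "\<forall>x. norm x = r0 \<longrightarrow> (\<forall>t\<in>{0<..T}. w x t = G x t)"
    and w0_lim: "(w0 \<longlongrightarrow> 0) at_infinity"
    and f0_lim: "((\<lambda>x. SUP t\<in>{0..T}. \<bar>f0 x t\<bar>) \<longlongrightarrow> 0) at_infinity"
  shows "((\<lambda>r. SUP p\<in>{x::real^'n. norm x = r} \<times> {0..T}. \<bar>w (fst p) (snd p)\<bar>) \<longlongrightarrow> 0) at_top"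
proof -
  have "U = - cball 0 r0" by (auto simp: U_def)
  then have closure_U: "closure U = {x. r0 \<le> norm x}" by (auto simp: closure_complement interior_cball)
  have "\<forall>r\<ge>r0. Shat differentiable (at r within {r0..})"
    using Shat_ode by (auto simp: real_differentiable_def)
  then interpret two_phase_coefficients a10 a20 a1 a2 al1 al2 N1 N2 f1 f2 pcd r0 c1 c2
    slo shi Shat n g1 g2 F1 F2 Sstar u1 u2 b B A
    by (intro two_phase_coefficients.intro n_def dim g1_def g2_def F1_def F2_def Sstar_def u1_def u2_def
        B_def A_def b_def g1_adm g2_adm f1_cont f2_cont f1_diff f2_diff f1_C1 f2_C1 f1_0 f2_1 f1_mono
        f2_mono pcd_diff pcd_C1 pcd_pos r0_pos Shat_bounds)
  have "C21 {x. r0 < norm x} T w" "continuous_on ({x. r0 \<le> norm x} \<times> {0..T}) (\<lambda>(x, t). w x t)"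
    "\<And>x t. r0 < norm x \<Longrightarrow> t \<in> {0<..T} \<Longrightarrow> Lop A b T w x t = f0 x t"
    "\<And>x. r0 < norm x \<Longrightarrow> w x 0 = w0 x"
    using w_C21 w_cont w_eq w_init unfolding closure_U by (simp_all add: U_def)
  then obtain Q blo bhi where problem: "radial_exterior_problem r0 T Q blo bhi alpha beta A b w f0 w0"
    using ex_radial_exterior_problem[OF T_pos] by blast
  obtain M where "\<forall>x\<in>closure U. \<forall>t\<in>{0..T}. \<bar>w x t\<bar> \<le> M" using w_bdd by blast
  then have M: "\<And>x t. r0 \<le> norm x \<Longrightarrow> t \<in> {0..T} \<Longrightarrow> \<bar>w x t\<bar> \<le> M" by (simp add: closure_U)
  have "\<And>\<epsilon>. 0 < \<epsilon> \<Longrightarrow> \<exists>R. \<forall>x t. R \<le> norm x \<longrightarrow> t \<in> {0..T} \<longrightarrow> \<bar>f0 x t\<bar> \<le> \<epsilon>"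
    using f0_cont unfolding closure_U by (rule uniform_bound_of_sup_tendsto[OF f0_lim])
  from radial_exterior_problem.sphere_sup_tendsto_zero[OF problem M w0_lim this] show ?thesis .
qed

end
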